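(* Let $\mathcal I$ be a finite set of agents, $H\in(\tfrac12,1)$, $b_1,x_0\in\mathbb{R}$, and for each $j\in\mathcal I$ let $b_{2j}\in\mathbb{R}\setminus\{0\}$, $q_j>0$, $r_j>0$. Agents use controls $u_j(t)=K_jx(t)$, $K_j\in\mathbb{R}$, where the common state solves $$x(t)=x_0+\int_0^t\Big(b_1x(t')+\sum_{j\in\mathcal I}b_{2j}u_j(t')\Big)dt'+R^H(t),$$ $R^H$ being a Rosenblatt process of Hurst index $H$, and agent $i$'s cost (to be minimized) is $L_{i,\infty}(u)=\limsup_{T\to\infty}\frac1T\mathbb{E}\int_0^T\big(q_ix^2(t)+r_iu_i^2(t)\big)dt$, with admissible set $\mathcal U_i=\{u_i(t)=K_ix(t):K_i\in\mathbb{R},\ b_1+\sum_{j\in\mathcal I}b_{2j}K_j<0\}$. If there exists $(K_i)_{i\in\mathcal I}$ solving, for all $i\in\mathcal I$, $$K_i=-\frac{b_1+\sum_{j\in\mathcal I\setminus\{i\}}b_{2j}K_j+\sqrt{\big(b_1+\sum_{j\in\mathcal I\setminus\{i\}}b_{2j}K_j\big)^2+4H(1-H)\frac{b_{2i}^2q_i}{r_i}}}{2b_{2i}(1-H)},$$ together with $b_1+\sum_{j\in\mathcal I}b_{2j}K_j<0$, then this non-zero-sum stochastic differential game has an equilibrium in stationary linear state-feedback strategies (within the classes $\mathcal U_i$).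
   Context: The Rosenblatt process with Hurst index $H\in(\tfrac12,1)$ is $R^H(t)=C_R^H\int_{\mathbb{R}^2}\Big(\int_0^t(u-y_1)_+^{\frac H2-1}(u-y_2)_+^{\frac H2-1}du\Big)\,dW(y_1)\,dW(y_2)$, a double Wiener–Itô integral with respect to a two-sided standard Brownian motion $W$, where $C_R^H>0$ normalizes $\mathbb{E}[R^H(1)^2]=1$; it is centered, self-similar of index $H$, non-Gaussian, with continuous paths. Integrals against $R^H$ of deterministic smooth integrands are defined pathwise by integration by parts. *)

theory Defs
  imports "HOL-Probability.Probability"
begin

text \<open>We assume instead the properties of a
Rosenblatt process R^H on a probability space M that the statement relies on:
measurable, R(0)=0, continuous paths on [0,oo), square integrable, centred, with the
fractional covariance E[R(s)R(t)] = (s^(2H) + t^(2H) - |t-s|^(2H))/2.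
Every Rosenblatt process satisfies these.\<close>
definition rosenblatt_second_order :: "'w measure \<Rightarrow> real \<Rightarrow> (real \<Rightarrow> 'w \<Rightarrow> real) \<Rightarrow> bool" where
  "rosenblatt_second_order M H R \<longleftrightarrow>
     (\<forall>t. R t \<in> borel_measurable M) \<and>
     (\<forall>\<omega>\<in>space M. R 0 \<omega> = 0 \<and> continuous_on {0..} (\<lambda>t. R t \<omega>)) \<and>
     (\<forall>t\<ge>0. integrable M (\<lambda>\<omega>. (R t \<omega>)\<^sup>2)) \<and>
     (\<forall>t\<ge>0. (\<integral>\<omega>. R t \<omega> \<partial>M) = 0) \<and>
     (\<forall>s\<ge>0. \<forall>t\<ge>0. (\<integral>\<omega>. R s \<omega> * R t \<omega> \<partial>M)
         = (s powr (2*H) + t powr (2*H) - \<bar>t - s\<bar> powr (2*H)) / 2)"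

definition admissible_gains :: "'i set \<Rightarrow> real \<Rightarrow> ('i \<Rightarrow> real) \<Rightarrow> ('i \<Rightarrow> real) \<Rightarrow> bool" where
  "admissible_gains I b1 b2 K \<longleftrightarrow> b1 + (\<Sum>j\<in>I. b2 j * K j) < 0"

definition state_solution ::
  "'w measure \<Rightarrow> (real \<Rightarrow> 'w \<Rightarrow> real) \<Rightarrow> 'i set \<Rightarrow> real \<Rightarrow> ('i \<Rightarrow> real) \<Rightarrow> real
   \<Rightarrow> ('i \<Rightarrow> real) \<Rightarrow> (real \<Rightarrow> 'w \<Rightarrow> real) \<Rightarrow> bool" where
  "state_solution M R I b1 b2 x0 K x \<longleftrightarrow>
     (\<forall>\<omega>\<in>space M. \<forall>t\<ge>0.
        (\<lambda>s. x s \<omega>) integrable_on {0..t} \<and>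
        x t \<omega> = x0 + integral {0..t} (\<lambda>s. b1 * x s \<omega> + (\<Sum>j\<in>I. b2 j * (K j * x s \<omega>)))
                 + R t \<omega>)"

text \<open>Long-run average cost of agent i:
limsup_{T->oo} (1/T) E int_0^T (q_i x^2 + r_i u_i^2) dt (nonnegative integrand, so
taken in ennreal).\<close>
definition avg_cost ::
  "'w measure \<Rightarrow> ('i \<Rightarrow> real) \<Rightarrow> ('i \<Rightarrow> real) \<Rightarrow> 'i \<Rightarrow> ('i \<Rightarrow> real)
   \<Rightarrow> (real \<Rightarrow> 'w \<Rightarrow> real) \<Rightarrow> ennreal" where
  "avg_cost M q r i K x =
     Limsup at_top (\<lambda>T::real. ennreal (1 / T) *
       (\<integral>\<^sup>+ \<omega>. (\<integral>\<^sup>+ t\<in>{0..T}. ennreal (q i * (x t \<omega>)\<^sup>2 + r i * (K i * x t \<omega>)\<^sup>2) \<partial>lborel) \<partial>M))"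

definition linear_feedback_equilibrium ::
  "'w measure \<Rightarrow> (real \<Rightarrow> 'w \<Rightarrow> real) \<Rightarrow> 'i set \<Rightarrow> real \<Rightarrow> ('i \<Rightarrow> real) \<Rightarrow> real
   \<Rightarrow> ('i \<Rightarrow> real) \<Rightarrow> ('i \<Rightarrow> real) \<Rightarrow> ('i \<Rightarrow> real) \<Rightarrow> bool" where
  "linear_feedback_equilibrium M R I b1 b2 x0 q r K \<longleftrightarrow>
     admissible_gains I b1 b2 K \<and>
     (\<exists>x. state_solution M R I b1 b2 x0 K x) \<and>
     (\<forall>i\<in>I. \<forall>k::real. admissible_gains I b1 b2 (K(i := k)) \<longrightarrow>
        (\<forall>x y. state_solution M R I b1 b2 x0 K x \<longrightarrow>
               state_solution M R I b1 b2 x0 (K(i := k)) y \<longrightarrow>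
               avg_cost M q r i K x \<le> avg_cost M q r i (K(i := k)) y))"

end

theory Submission
  imports Defs
begin

text \<open>With gains K the closed-loop rate is a = b1 + sum_j b2j K_j < 0 and the state is the
Ornstein--Uhlenbeck type process x(t) = e^(at) x0 + Z_a(t), where
Z_a(t) = R(t) + a e^(at) int_0^t e^(-as) R(s) ds. The second moment of Z_a(t) is a functional
of the covariance of R alone, and l^H R(./l) has the same covariance as R, so
E Z_(-l)(t)^2 = l^(-2H) E Z_(-1)(l t)^2. The deterministic part e^(at) x0 disappears under
time averaging, hence agent i's long-run cost is (q_i + r_i K_i^2) (-a)^(-2H) V, where the
Cesaro limsup V of E Z_(-1)^2 does not depend on the gains (it is never evaluated).
A unilateral deviation k of agent i only changes the first factor; in terms of
s = -(c + b2i k) > 0, with c = b1 + sum_(j ~= i) b2j K_j, it is proportional to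
(b2i^2 q_i / r_i + (c + s)^2) s^(-2H), whose only critical point on (0, oo) is a minimum
and corresponds exactly to the stated K_i.\<close>

lemma floor_grid_le: "real_of_int \<lfloor>real (Suc n) * s\<rfloor> / real (Suc n) \<le> s"
  by (simp add: divide_le_eq mult.commute)

lemma floor_grid_tendsto: "(\<lambda>n. real_of_int \<lfloor>real (Suc n) * s\<rfloor> / real (Suc n)) \<longlonglongrightarrow> s"
proof (rule tendsto_sandwich[OF _ _ _ tendsto_const])
  have "s - inverse (real (Suc n)) \<le> real_of_int \<lfloor>real (Suc n) * s\<rfloor> / real (Suc n)" for n
  proof -
    have "s - inverse (real (Suc n)) = (real (Suc n) * s - 1) / real (Suc n)"
      by (simp add: field_simps)
    also have "\<dots> \<le> real_of_int \<lfloor>real (Suc n) * s\<rfloor> / real (Suc n)"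
      by (intro divide_right_mono) linarith+
    finally show ?thesis .
  qed
  then show "\<forall>\<^sub>F n in sequentially. s - inverse (real (Suc n)) \<le> real_of_int \<lfloor>real (Suc n) * s\<rfloor> / real (Suc n)"
    by simp
  show "\<forall>\<^sub>F n in sequentially. real_of_int \<lfloor>real (Suc n) * s\<rfloor> / real (Suc n) \<le> s"
    using floor_grid_le by simp
  show "(\<lambda>n. s - inverse (real (Suc n))) \<longlonglongrightarrow> s"
    using tendsto_diff[OF tendsto_const LIMSEQ_inverse_real_of_nat, of s] by simp
qed

(* Processes indexed by [0, oo) are read at max 0 s, which turns them into functions on M x lborel. *)
lemma continuous_process_measurable_pair:
  fixes f :: "real \<Rightarrow> 'w \<Rightarrow> real"
  assumes meas: "\<And>t. t \<ge> 0 \<Longrightarrow> f t \<in> borel_measurable M"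
    and cont: "\<And>\<omega> b. \<omega> \<in> space M \<Longrightarrow> b \<ge> 0 \<Longrightarrow> continuous_on {0..b} (\<lambda>t. f t \<omega>)"
  shows "(\<lambda>(\<omega>,s). f (max 0 s) \<omega>) \<in> borel_measurable (M \<Otimes>\<^sub>M lborel)"
proof (rule borel_measurable_LIMSEQ_real)
  fix n
  have "(\<lambda>z. f (max 0 (real_of_int i / real (Suc n))) (fst z)) \<in> borel_measurable (M \<Otimes>\<^sub>M lborel)" for i :: int
    by (rule measurable_compose[OF measurable_fst meas]) simp
  moreover have "(\<lambda>z::'w \<times> real. \<lfloor>real (Suc n) * snd z\<rfloor>) \<in> measurable (M \<Otimes>\<^sub>M lborel) (count_space UNIV)"
    by (rule measurable_compose[OF _ measurable_real_floor]) simp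
  ultimately show "(\<lambda>z. f (max 0 (real_of_int \<lfloor>real (Suc n) * snd z\<rfloor> / real (Suc n))) (fst z))
      \<in> borel_measurable (M \<Otimes>\<^sub>M lborel)"
    by (rule measurable_compose_countable)
next
  fix z :: "'w \<times> real" assume "z \<in> space (M \<Otimes>\<^sub>M lborel)"
  then obtain \<omega> s where z: "z = (\<omega>, s)" and \<omega>: "\<omega> \<in> space M"
    by (cases z) (simp add: space_pair_measure)
  have "(\<lambda>n. max 0 (real_of_int \<lfloor>real (Suc n) * s\<rfloor> / real (Suc n))) \<longlonglongrightarrow> max 0 s"
    by (intro tendsto_max tendsto_const floor_grid_tendsto)
  moreover have "max 0 (real_of_int \<lfloor>real (Suc n) * s\<rfloor> / real (Suc n)) \<in> {0..max 0 s}" for n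
    using floor_grid_le[of n s] by auto
  ultimately have "(\<lambda>n. f (max 0 (real_of_int \<lfloor>real (Suc n) * s\<rfloor> / real (Suc n))) \<omega>) \<longlonglongrightarrow> f (max 0 s) \<omega>"
    by (intro continuous_on_tendsto_compose[OF cont[OF \<omega>, of "max 0 s"]]) auto
  then show "(\<lambda>n. f (max 0 (real_of_int \<lfloor>real (Suc n) * snd z\<rfloor> / real (Suc n))) (fst z))
      \<longlonglongrightarrow> (case z of (\<omega>, s) \<Rightarrow> f (max 0 s) \<omega>)"
    unfolding z by simp
qed

lemma continuous_process_measurable_pair_swap:
  fixes f :: "real \<Rightarrow> 'w \<Rightarrow> real"
  assumes meas: "\<And>t. t \<ge> 0 \<Longrightarrow> f t \<in> borel_measurable M"
    and cont: "\<And>\<omega> b. \<omega> \<in> space M \<Longrightarrow> b \<ge> 0 \<Longrightarrow> continuous_on {0..b} (\<lambda>t. f t \<omega>)"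
  shows "(\<lambda>(s,\<omega>). f (max 0 s) \<omega>) \<in> borel_measurable (borel \<Otimes>\<^sub>M M)"
proof -
  have "(\<lambda>(\<omega>,s). f (max 0 s) \<omega>) \<in> borel_measurable (M \<Otimes>\<^sub>M lborel)"
    by (rule continuous_process_measurable_pair[OF meas cont])
  then have "(\<lambda>(\<omega>,s). f (max 0 s) \<omega>) \<circ> (\<lambda>(s,\<omega>). (\<omega>,s)) \<in> borel_measurable (lborel \<Otimes>\<^sub>M M)"
    by (rule measurable_comp[OF measurable_pair_swap'])
  then have "(\<lambda>(s,\<omega>). f (max 0 s) \<omega>) \<in> borel_measurable (lborel \<Otimes>\<^sub>M M)"
    by (simp add: comp_def case_prod_beta)
  then show ?thesis
    by (subst measurable_cong_sets[OF sets_pair_measure_cong[OF sets_lborel refl] refl, symmetric])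
qed

lemma continuous_on_Icc_abs_bound:
  fixes g :: "real \<Rightarrow> real"
  assumes "continuous_on {a..b} g"
  obtains G where "G \<ge> 0" "\<And>s. s \<in> {a..b} \<Longrightarrow> \<bar>g s\<bar> \<le> G"
proof -
  have "compact (g ` {a..b})"
    by (rule compact_continuous_image[OF assms compact_Icc])
  then obtain B where B: "\<forall>y\<in>g ` {a..b}. norm y \<le> B"
    using compact_imp_bounded bounded_iff by metis
  have "\<bar>g s\<bar> \<le> max 0 B" if "s \<in> {a..b}" for s
  proof -
    have "norm (g s) \<le> B" using B that by blast
    then show ?thesis by simp
  qed
  then show ?thesis using that[of "max 0 B"] by simp
qed

lemma integral_square_le:
  fixes f :: "real \<Rightarrow> real"
  assumes fc: "continuous_on {0..t} f" and t: "t \<ge> 0"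
  shows "(integral {0..t} f)\<^sup>2 \<le> t * integral {0..t} (\<lambda>s. (f s)\<^sup>2)"
proof (cases "t = 0")
  case True then show ?thesis by simp
next
  case False
  with t have tp: "t > 0" by simp
  define I where "I = integral {0..t} f"
  define J where "J = integral {0..t} (\<lambda>s. (f s)\<^sup>2)"
  define m where "m = I / t"
  have f2c: "continuous_on {0..t} (\<lambda>s. (f s)\<^sup>2)" by (intro continuous_intros fc)
  have h1: "((\<lambda>s. (f s)\<^sup>2) has_integral J) {0..t}"
    unfolding J_def by (rule integrable_integral[OF integrable_continuous_real[OF f2c]])
  have h0: "(f has_integral I) {0..t}"
    unfolding I_def by (rule integrable_integral[OF integrable_continuous_real[OF fc]])
  have h2: "((\<lambda>s. 2*m * f s) has_integral 2*m*I) {0..t}"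
    by (rule has_integral_mult_right[OF h0])
  have h3: "((\<lambda>s. m\<^sup>2) has_integral t * m\<^sup>2) {0..t}"
    using has_integral_const_real[of "m\<^sup>2" 0 t] t by simp
  have "((\<lambda>s. (f s)\<^sup>2 - 2*m * f s + m\<^sup>2) has_integral J - 2*m*I + t * m\<^sup>2) {0..t}"
    by (intro has_integral_add has_integral_diff h1 h2 h3)
  moreover have "0 \<le> (f s)\<^sup>2 - 2*m * f s + m\<^sup>2" for s
  proof -
    have "0 \<le> (f s - m)\<^sup>2" by simp
    then show ?thesis by (simp add: power2_eq_square algebra_simps)
  qed
  ultimately have "0 \<le> J - 2*m*I + t * m\<^sup>2" by (rule has_integral_nonneg)
  then have "0 \<le> t * (J - 2*m*I + t * m\<^sup>2)" using tp by simp
  also have "t * (J - 2*m*I + t * m\<^sup>2) = t * J - I\<^sup>2"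
    using tp by (simp add: m_def field_simps power2_eq_square)
  finally show ?thesis unfolding I_def J_def by simp
qed

lemma set_integral_Icc_eq_integral:
  fixes f :: "real \<Rightarrow> real"
  shows "continuous_on {a..b} f \<Longrightarrow> (LINT s:{a..b}|lborel. f s) = integral {a..b} f"
  by (rule set_borel_integral_eq_integral(2)[OF borel_integrable_atLeastAtMost'])

lemma set_integral_Icc_cong:
  fixes f g :: "real \<Rightarrow> real"
  shows "(\<And>s. s \<in> {a..b} \<Longrightarrow> f s = g s) \<Longrightarrow> (LINT s:{a..b}|lborel. f s) = (LINT s:{a..b}|lborel. g s)"
  by (rule set_lebesgue_integral_cong) simp_all

lemma set_integral_Icc_real:
  fixes f :: "real \<Rightarrow> real"
  shows "(LINT s:{a..b}|lborel. f s) = (\<integral>s. indicator {a..b} s * f s \<partial>lborel)"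
  by (simp add: set_lebesgue_integral_def)

lemma set_integral_mult_square_le:
  fixes g r :: "real \<Rightarrow> real"
  assumes gc: "continuous_on {0..t} g" and rc: "continuous_on {0..t} r" and t: "t \<ge> 0"
    and G: "\<And>s. s \<in> {0..t} \<Longrightarrow> \<bar>g s\<bar> \<le> G"
  shows "(LINT s:{0..t}|lborel. g s * r s)\<^sup>2 \<le> t * G\<^sup>2 * (LINT s:{0..t}|lborel. (r s)\<^sup>2)"
proof -
  have c1: "continuous_on {0..t} (\<lambda>s. g s * r s)" by (intro continuous_intros gc rc)
  have c2: "continuous_on {0..t} (\<lambda>s. (r s)\<^sup>2)" by (intro continuous_intros rc)
  have "(LINT s:{0..t}|lborel. g s * r s)\<^sup>2 = (integral {0..t} (\<lambda>s. g s * r s))\<^sup>2"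
    by (simp add: set_integral_Icc_eq_integral[OF c1])
  also have "\<dots> \<le> t * integral {0..t} (\<lambda>s. (g s * r s)\<^sup>2)"
    by (rule integral_square_le[OF c1 t])
  also have "\<dots> \<le> t * integral {0..t} (\<lambda>s. G\<^sup>2 * (r s)\<^sup>2)"
  proof (intro mult_left_mono integral_le t)
    show "(\<lambda>s. (g s * r s)\<^sup>2) integrable_on {0..t}"
      by (intro integrable_continuous_real continuous_intros c1)
    show "(\<lambda>s. G\<^sup>2 * (r s)\<^sup>2) integrable_on {0..t}"
      by (intro integrable_continuous_real continuous_intros c2)
    fix s assume "s \<in> {0..t}"
    then have "(g s)\<^sup>2 \<le> G\<^sup>2" using G by (metis abs_ge_zero order.trans power2_abs power_mono)
    then show "(g s * r s)\<^sup>2 \<le> G\<^sup>2 * (r s)\<^sup>2" by (simp add: power_mult_distrib mult_right_mono)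
  qed
  also have "\<dots> = t * G\<^sup>2 * (LINT s:{0..t}|lborel. (r s)\<^sup>2)"
    by (simp add: set_integral_Icc_eq_integral[OF c2])
  finally show ?thesis .
qed

lemma variation_of_constants_solves:
  fixes r :: "real \<Rightarrow> real" and a x0 :: real
  assumes rc: "continuous_on {0..} r" and b: "b \<ge> 0"
  defines "f \<equiv> \<lambda>t. exp (a*t) * x0 + r t + a * exp (a*t) * integral {0..t} (\<lambda>s. exp (- (a* s)) * r s)"
  shows "continuous_on {0..b} f" "f integrable_on {0..b}" "f b = x0 + integral {0..b} (\<lambda>s. a * f s) + r b"
proof -
  have rcb: "continuous_on {0..b} r" by (rule continuous_on_subset[OF rc]) auto
  have ec: "continuous_on {0..b} (\<lambda>s. exp (- (a* s)) * r s)" by (intro continuous_intros rcb)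
  define J where "J = (\<lambda>t. integral {0..t} (\<lambda>s. exp (- (a* s)) * r s))"
  have Jc: "continuous_on {0..b} J" unfolding J_def
    by (rule indefinite_integral_continuous_1[OF integrable_continuous_real[OF ec]])
  have fJ: "f = (\<lambda>t. exp (a*t) * x0 + r t + a * exp (a*t) * J t)" unfolding f_def J_def ..
  show fc: "continuous_on {0..b} f" unfolding fJ by (intro continuous_intros rcb Jc)
  then show "f integrable_on {0..b}" by (rule integrable_continuous_real)
  define Y where "Y = (\<lambda>t. exp (a*t) * (x0 + a * J t))"
  have dJ: "(J has_real_derivative exp (- (a*t)) * r t) (at t within {0..b})" if "t \<in> {0..b}" for t
    unfolding J_def has_real_derivative_iff_has_vector_derivative
    by (rule integral_has_vector_derivative[OF ec that])
  have dY: "(Y has_real_derivative a * f t) (at t within {0..b})" if t: "t \<in> {0..b}" for t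
  proof -
    have "(Y has_real_derivative (a * exp (a*t) * (x0 + a * J t) + exp (a*t) * (a * (exp (- (a*t)) * r t)))) (at t within {0..b})"
      unfolding Y_def by (auto intro!: derivative_eq_intros dJ[OF t])
    moreover have "a * exp (a*t) * (x0 + a * J t) + exp (a*t) * (a * (exp (- (a*t)) * r t)) = a * f t"
      unfolding fJ by (simp add: algebra_simps exp_minus field_simps)
    ultimately show ?thesis by simp
  qed
  have "((\<lambda>s. a * f s) has_integral (Y b - Y 0)) {0..b}"
    using dY b by (intro fundamental_theorem_of_calculus) (auto simp: has_real_derivative_iff_has_vector_derivative[symmetric])
  then have "integral {0..b} (\<lambda>s. a * f s) = Y b - Y 0" by (rule integral_unique)
  moreover have "Y 0 = x0" by (simp add: Y_def J_def)
  moreover have "f b = Y b + r b" by (simp add: fJ Y_def algebra_simps)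
  ultimately show "f b = x0 + integral {0..b} (\<lambda>s. a * f s) + r b" by simp
qed

lemma variation_of_constants_unique:
  fixes f r :: "real \<Rightarrow> real" and a x0 :: real
  assumes rc: "continuous_on {0..} r"
    and sol: "\<And>t. t \<ge> 0 \<Longrightarrow> f integrable_on {0..t} \<and> f t = x0 + integral {0..t} (\<lambda>s. a * f s) + r t"
    and b: "b \<ge> 0"
  shows "f b = exp (a*b) * x0 + r b + a * exp (a*b) * integral {0..b} (\<lambda>s. exp (- (a* s)) * r s)"
proof -
  have rcb: "continuous_on {0..b} r" by (rule continuous_on_subset[OF rc]) auto
  have fi: "f integrable_on {0..b}" using sol[OF b] by blast
  have afi: "(\<lambda>s. a * f s) integrable_on {0..b}" using integrable_on_cmult_left[OF fi, of a] by simp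
  define Y where "Y = (\<lambda>t. x0 + integral {0..t} (\<lambda>s. a * f s))"
  have Yc: "continuous_on {0..b} Y" unfolding Y_def
    by (intro continuous_intros indefinite_integral_continuous_1[OF afi])
  have fY: "f t = Y t + r t" if "t \<in> {0..b}" for t using sol[of t] that by (simp add: Y_def)
  have fc: "continuous_on {0..b} f"
    by (rule continuous_on_eq[of _ "\<lambda>t. Y t + r t"]) (intro continuous_intros Yc rcb, simp add: fY)
  have afc: "continuous_on {0..b} (\<lambda>s. a * f s)" by (intro continuous_intros fc)
  have dY: "(Y has_real_derivative a * f t) (at t within {0..b})" if t: "t \<in> {0..b}" for t
  proof -
    have d: "((\<lambda>u. integral {0..u} f) has_real_derivative f t) (at t within {0..b})"
      unfolding has_real_derivative_iff_has_vector_derivative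
      by (rule integral_has_vector_derivative[OF fc t])
    have Yeq: "Y = (\<lambda>u. x0 + a * integral {0..u} f)" unfolding Y_def by simp
    show ?thesis unfolding Yeq by (auto intro!: derivative_eq_intros d)
  qed
  define P where "P = (\<lambda>t. exp (- (a*t)) * Y t)"
  have dP: "(P has_real_derivative a * (exp (- (a*t)) * r t)) (at t within {0..b})" if t: "t \<in> {0..b}" for t
  proof -
    have "(P has_real_derivative (- a * exp (- (a*t)) * Y t + exp (- (a*t)) * (a * f t))) (at t within {0..b})"
      unfolding P_def by (auto intro!: derivative_eq_intros dY[OF t])
    moreover have "- a * exp (- (a*t)) * Y t + exp (- (a*t)) * (a * f t) = a * (exp (- (a*t)) * r t)"
      using fY[OF t] by (simp add: algebra_simps)
    ultimately show ?thesis by simp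
  qed
  have "((\<lambda>s. a * (exp (- (a* s)) * r s)) has_integral (P b - P 0)) {0..b}"
    using dP b by (intro fundamental_theorem_of_calculus) (auto simp: has_real_derivative_iff_has_vector_derivative[symmetric])
  then have "integral {0..b} (\<lambda>s. a * (exp (- (a* s)) * r s)) = P b - P 0" by (rule integral_unique)
  moreover have "integral {0..b} (\<lambda>s. a * (exp (- (a* s)) * r s)) = a * integral {0..b} (\<lambda>s. exp (- (a* s)) * r s)"
    using integral_cmul[where c=a and f="\<lambda>s. exp (- (a* s)) * r s" and S="{0..b}"] by simp
  moreover have "P 0 = x0" by (simp add: P_def Y_def)
  ultimately have "exp (- (a*b)) * Y b = x0 + a * integral {0..b} (\<lambda>s. exp (- (a* s)) * r s)"
    by (simp add: P_def)
  then have "Y b = exp (a*b) * (x0 + a * integral {0..b} (\<lambda>s. exp (- (a* s)) * r s))"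
    by (simp add: exp_minus field_simps)
  then show ?thesis using fY[of b] b by (simp add: algebra_simps)
qed

lemma nn_integral_exp_square_le:
  fixes a Q x0 T :: real
  assumes a: "a < 0" and Q: "Q \<ge> 0" and T: "T \<ge> 0"
  shows "(\<integral>\<^sup>+t. ennreal (Q * (exp (a * t) * x0)\<^sup>2) * indicator {0..T} t \<partial>lborel) \<le> ennreal (Q * x0\<^sup>2 / (- 2 * a))"
proof -
  define f where "f = (\<lambda>t. Q * (exp (a * t) * x0)\<^sup>2)"
  have fc: "continuous_on {0..T} f" unfolding f_def by (intro continuous_intros)
  have fe: "f t = Q * x0\<^sup>2 * exp (2 * a * t)" for t
  proof -
    have "2 * a * t = a * t + a * t" by simp
    then have "exp (2 * a * t) = exp (a * t) * exp (a * t)" by (simp only: exp_add)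
    then show ?thesis unfolding f_def by (simp add: power2_eq_square)
  qed
  have intf: "integrable lborel (\<lambda>t. indicator {0..T} t * f t)"
    using borel_integrable_atLeastAtMost'[OF fc] unfolding set_integrable_def by simp
  have "(\<integral>\<^sup>+t. ennreal (Q * (exp (a * t) * x0)\<^sup>2) * indicator {0..T} t \<partial>lborel) = (\<integral>\<^sup>+t. ennreal (indicator {0..T} t * f t) \<partial>lborel)"
    by (intro nn_integral_cong) (simp add: f_def split: split_indicator)
  also have "\<dots> = ennreal (\<integral>t. indicator {0..T} t * f t \<partial>lborel)"
    by (rule nn_integral_eq_integral[OF intf]) (simp add: f_def Q)
  also have "(\<integral>t. indicator {0..T} t * f t \<partial>lborel) = integral {0..T} f"
    using set_integral_Icc_eq_integral[OF fc] unfolding set_integral_Icc_real .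
  also have "integral {0..T} f = Q * x0\<^sup>2 * exp (2 * a * T) / (2 * a) - Q * x0\<^sup>2 / (2 * a)"
  proof -
    have "(f has_integral ((\<lambda>t. Q * x0\<^sup>2 * exp (2 * a * t) / (2 * a)) T - (\<lambda>t. Q * x0\<^sup>2 * exp (2 * a * t) / (2 * a)) 0)) {0..T}"
    proof (rule fundamental_theorem_of_calculus[OF T])
      fix t assume "t \<in> {0..T}"
      have "((\<lambda>t. Q * x0\<^sup>2 * exp (2 * a * t) / (2 * a)) has_real_derivative (Q * x0\<^sup>2 * (exp (2 * a * t) * (2 * a)) / (2 * a))) (at t within {0..T})"
        by (auto intro!: derivative_eq_intros)
      moreover have "Q * x0\<^sup>2 * (exp (2 * a * t) * (2 * a)) / (2 * a) = f t" using a by (simp add: fe)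
      ultimately show "((\<lambda>t. Q * x0\<^sup>2 * exp (2 * a * t) / (2 * a)) has_vector_derivative f t) (at t within {0..T})"
        by (simp add: has_real_derivative_iff_has_vector_derivative)
    qed
    then show ?thesis by (simp add: integral_unique)
  qed
  also have "\<dots> \<le> Q * x0\<^sup>2 / (- 2 * a)"
  proof -
    have "Q * x0\<^sup>2 * exp (2 * a * T) / (2 * a) \<le> 0"
      using a Q by (intro divide_nonneg_neg mult_nonneg_nonneg) auto
    moreover have "Q * x0\<^sup>2 / (2 * a) = - (Q * x0\<^sup>2 / (- 2 * a))" by simp
    ultimately show ?thesis by linarith
  qed
  finally show ?thesis by (simp add: ennreal_leI)
qed

lemma exp_square_time_average_vanishes:
  fixes a Q x0 e :: real
  assumes a: "a < 0" and Q: "Q \<ge> 0" and e: "e > 0"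
  shows "eventually (\<lambda>T. ennreal (1 / T) * (\<integral>\<^sup>+t. ennreal (Q * (exp (a * t) * x0)\<^sup>2) * indicator {0..T} t \<partial>lborel)
           \<le> ennreal e) at_top"
proof -
  define B where "B = Q * x0\<^sup>2 / (- 2 * a)"
  have B: "B \<ge> 0" unfolding B_def using a Q by (intro divide_nonneg_pos) auto
  show ?thesis
  proof (rule eventually_mono[OF eventually_gt_at_top[of "B / e + 1"]])
    fix T assume T: "T > B / e + 1"
    have Tp: "T > 0" using T B e by (smt (verit) divide_nonneg_pos)
    have "ennreal (1 / T) * (\<integral>\<^sup>+t. ennreal (Q * (exp (a * t) * x0)\<^sup>2) * indicator {0..T} t \<partial>lborel)
        \<le> ennreal (1 / T) * ennreal B"
      unfolding B_def by (intro mult_left_mono nn_integral_exp_square_le a Q) (use Tp in auto)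
    also have "\<dots> = ennreal (B / T)" using Tp B by (simp add: ennreal_mult[symmetric])
    also have "\<dots> \<le> ennreal e"
      using T e Tp by (intro ennreal_leI) (simp add: divide_le_eq field_simps)
    finally show "ennreal (1 / T) * (\<integral>\<^sup>+t. ennreal (Q * (exp (a * t) * x0)\<^sup>2) * indicator {0..T} t \<partial>lborel)
        \<le> ennreal e" .
  qed
qed

lemma nn_integral_Icc_rescale:
  fixes f :: "real \<Rightarrow> ennreal" and l T :: real
  assumes l: "l > 0" and [measurable]: "f \<in> borel_measurable borel"
  shows "(\<integral>\<^sup>+t. f (l * t) * indicator {0..T} t \<partial>lborel)
       = ennreal (1 / l) * (\<integral>\<^sup>+u. f u * indicator {0..l * T} u \<partial>lborel)"
proof -
  have "(\<integral>\<^sup>+u. f u * indicator {0..l * T} u \<partial>lborel)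
      = ennreal \<bar>l\<bar> * (\<integral>\<^sup>+x. f (0 + l * x) * indicator {0..l * T} (0 + l * x) \<partial>lborel)"
    by (rule nn_integral_real_affine) (measurable, use l in simp)
  also have "(\<lambda>x. f (0 + l * x) * indicator {0..l * T} (0 + l * x)) = (\<lambda>x. f (l * x) * indicator {0..T} x)"
    using l by (auto simp: fun_eq_iff split: split_indicator simp: zero_le_mult_iff)
  finally have "ennreal (1 / l) * (\<integral>\<^sup>+u. f u * indicator {0..l * T} u \<partial>lborel)
      = (ennreal (1 / l) * ennreal l) * (\<integral>\<^sup>+t. f (l * t) * indicator {0..T} t \<partial>lborel)"
    using l by (simp add: mult.assoc)
  also have "ennreal (1 / l) * ennreal l = 1"
    using l by (simp add: ennreal_mult[symmetric])
  finally show ?thesis by simp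
qed

lemma Limsup_add_vanishing:
  fixes f g :: "real \<Rightarrow> ennreal"
  assumes ev: "\<And>e. e > 0 \<Longrightarrow> eventually (\<lambda>T. f T \<le> ennreal e) at_top"
  shows "Limsup at_top (\<lambda>T. f T + g T) = Limsup at_top g"
proof (rule antisym)
  show "Limsup at_top g \<le> Limsup at_top (\<lambda>T. f T + g T)"
    by (rule Limsup_mono) (simp add: add_increasing)
  show "Limsup at_top (\<lambda>T. f T + g T) \<le> Limsup at_top g"
  proof (rule ennreal_le_epsilon)
    fix e :: real assume e: "e > 0"
    have "Limsup at_top (\<lambda>T. f T + g T) \<le> Limsup at_top (\<lambda>T. ennreal e + g T)"
      by (rule Limsup_mono) (rule eventually_mono[OF ev[OF e]], simp add: add_right_mono)
    also have "\<dots> = ennreal e + Limsup at_top g"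
      by (rule Limsup_const_add) simp
    finally show "Limsup at_top (\<lambda>T. f T + g T) \<le> Limsup at_top g + ennreal e"
      by (simp add: add.commute)
  qed
qed

lemma filtermap_times_pos_at_top:
  fixes l :: real assumes l: "l > 0"
  shows "filtermap (\<lambda>T. l * T) at_top = at_top"
proof (rule filtermap_fun_inverse[of "\<lambda>x. x / l"])
  show "filterlim (\<lambda>x. x / l) at_top at_top"
    using filterlim_tendsto_pos_mult_at_top[OF tendsto_const[of "1 / l"] _ filterlim_ident] l
    by simp
  show "filterlim (\<lambda>T. l * T) at_top at_top"
    using filterlim_tendsto_pos_mult_at_top[OF tendsto_const[of l] l filterlim_ident] by simp
  show "\<forall>\<^sub>F x in at_top. l * (x / l) = x" using l by simp
qed

lemma Limsup_at_top_rescale: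
  fixes h :: "real \<Rightarrow> ennreal" and l :: real
  assumes l: "l > 0"
  shows "Limsup at_top (\<lambda>T. h (l * T)) = Limsup at_top h"
proof -
  have "inj (\<lambda>T::real. l * T)" using l by (intro injI) simp
  then have "Limsup (filtermap (\<lambda>T. l * T) at_top) h = Limsup at_top (\<lambda>T. h (l * T))"
    by (rule Limsup_filtermap_eq)
  then show ?thesis using filtermap_times_pos_at_top[OF l] by simp
qed

lemma quadratic_powr_has_derivative:
  fixes A c H s :: real
  assumes s: "s > 0"
  shows "((\<lambda>s. (A + (c + s)\<^sup>2) * s powr (-2 * H)) has_real_derivative
           s powr (-2 * H - 1) * (2 * (1 - H) * s\<^sup>2 + 2 * (1 - 2 * H) * c * s - 2 * H * (A + c\<^sup>2))) (at s)"
proof -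
  have d: "((\<lambda>s. (A + (c + s)\<^sup>2) * s powr (-2 * H)) has_real_derivative
      2 * (c + s) * s powr (-2 * H) + (A + (c + s)\<^sup>2) * ((-2 * H) * s powr (-2 * H - 1))) (at s)"
    by (rule derivative_eq_intros has_real_derivative_powr[OF s] refl | simp)+
  have "s powr (-2 * H) = s powr ((-2 * H - 1) + 1)" by simp
  also have "\<dots> = s powr (-2 * H - 1) * s powr 1" by (rule powr_add)
  finally have sp: "s powr (-2 * H) = s * s powr (-2 * H - 1)"
    using s by simp
  have "2 * (c + s) * s powr (-2 * H) + (A + (c + s)\<^sup>2) * ((-2 * H) * s powr (-2 * H - 1))
      = s powr (-2 * H - 1) * (2 * (1 - H) * s\<^sup>2 + 2 * (1 - 2 * H) * c * s - 2 * H * (A + c\<^sup>2))"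
    unfolding sp by (simp add: algebra_simps power2_eq_square)
  then show ?thesis using d by simp
qed

lemma quadratic_powr_critical_point:
  fixes A c H :: real
  assumes A: "A > 0" and H: "0 < H" "H < 1"
  defines "s\<^sub>0 \<equiv> ((2 * H - 1) * c + sqrt (c\<^sup>2 + 4 * H * (1 - H) * A)) / (2 * (1 - H))"
  defines "h \<equiv> \<lambda>s. 2 * (1 - H) * s\<^sup>2 + 2 * (1 - 2 * H) * c * s - 2 * H * (A + c\<^sup>2)"
  shows "s\<^sub>0 > 0" and "\<And>s. 0 < s \<Longrightarrow> s \<le> s\<^sub>0 \<Longrightarrow> h s \<le> 0" and "\<And>s. s\<^sub>0 \<le> s \<Longrightarrow> h s \<ge> 0"
proof -
  define D where "D = sqrt (c\<^sup>2 + 4 * H * (1 - H) * A)"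
  define s\<^sub>1 where "s\<^sub>1 = ((2 * H - 1) * c - D) / (2 * (1 - H))"
  have pos4: "0 < 4 * H * (1 - H) * A" using A H by simp
  have rad: "0 \<le> c\<^sup>2 + 4 * H * (1 - H) * A" using pos4 zero_le_power2[of c] by linarith
  have D2: "D\<^sup>2 = c\<^sup>2 + 4 * H * (1 - H) * A" unfolding D_def using rad by simp
  have D0: "D \<ge> 0" unfolding D_def using rad by simp
  have "c\<^sup>2 < D\<^sup>2" using D2 pos4 by simp
  then have cD: "\<bar>c\<bar> < D" using D0 by (metis abs_le_square_iff abs_of_nonneg not_less power2_abs)
  have "\<bar>2 * H - 1\<bar> < 1" using H by auto
  then have "\<bar>(2 * H - 1) * c\<bar> \<le> \<bar>c\<bar>" by (simp add: abs_mult mult_left_le_one_le)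
  then have p1: "(2 * H - 1) * c + D > 0" and p2: "(2 * H - 1) * c - D < 0" using cD by linarith+
  show s0_pos: "s\<^sub>0 > 0" unfolding s\<^sub>0_def D_def[symmetric] using p1 H by simp
  have s1_neg: "s\<^sub>1 < 0" unfolding s\<^sub>1_def using p2 H by (simp add: divide_neg_pos)
  define m where "m = 2 * (1 - H)"
  define P where "P = (2 * H - 1) * c"
  have mp: "m > 0" unfolding m_def using H by simp
  have fac: "h s = m * (s - s\<^sub>0) * (s - s\<^sub>1)" for s
  proof -
    have "m * (s - s\<^sub>0) * (s - s\<^sub>1) = ((m * s - P)\<^sup>2 - D\<^sup>2) / m"
      unfolding s\<^sub>0_def s\<^sub>1_def D_def[symmetric] m_def[symmetric] P_def[symmetric]
      using mp by (simp add: field_simps power2_eq_square)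
    moreover have "(m * s - P)\<^sup>2 - D\<^sup>2 = m * h s"
      unfolding D2 h_def m_def P_def by (simp add: power2_eq_square algebra_simps)
    ultimately show ?thesis using mp by simp
  qed
  show "h s \<le> 0" if "0 < s" "s \<le> s\<^sub>0" for s
    unfolding fac using that s1_neg mp by (intro mult_nonpos_nonneg mult_nonneg_nonpos) auto
  show "h s \<ge> 0" if "s\<^sub>0 \<le> s" for s
    unfolding fac using that s0_pos s1_neg mp by simp
qed

lemma quadratic_powr_minimum:
  fixes A c H s :: real
  assumes A: "A > 0" and H: "0 < H" "H < 1" and s: "s > 0"
  defines "s\<^sub>0 \<equiv> ((2 * H - 1) * c + sqrt (c\<^sup>2 + 4 * H * (1 - H) * A)) / (2 * (1 - H))"
  shows "(A + (c + s\<^sub>0)\<^sup>2) * s\<^sub>0 powr (-2 * H) \<le> (A + (c + s)\<^sup>2) * s powr (-2 * H)"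
proof -
  define g where "g = (\<lambda>s. (A + (c + s)\<^sup>2) * s powr (-2 * H))"
  define h where "h = (\<lambda>s. 2 * (1 - H) * s\<^sup>2 + 2 * (1 - 2 * H) * c * s - 2 * H * (A + c\<^sup>2))"
  note crit = quadratic_powr_critical_point[OF A H, where c=c, folded s\<^sub>0_def]
  have dg: "DERIV g x :> x powr (-2 * H - 1) * h x" if "x > 0" for x
    unfolding g_def h_def by (rule quadratic_powr_has_derivative[OF that])
  have "g s\<^sub>0 \<le> g s"
  proof (cases "s \<le> s\<^sub>0")
    case True
    show ?thesis
    proof (rule DERIV_nonpos_imp_nonincreasing[OF True])
      fix x assume x: "s \<le> x" "x \<le> s\<^sub>0"
      then have "x > 0" using s by simp
      then have "h x \<le> 0"
        unfolding h_def using x by (intro crit(2)) auto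
      then have "x powr (-2 * H - 1) * h x \<le> 0"
        by (simp add: mult_nonneg_nonpos)
      then show "\<exists>y. DERIV g x :> y \<and> y \<le> 0"
        using dg[OF \<open>x > 0\<close>] by blast
    qed
  next
    case False
    then have "s\<^sub>0 \<le> s" by simp
    then show ?thesis
    proof (rule DERIV_nonneg_imp_nondecreasing)
      fix x assume x: "s\<^sub>0 \<le> x" "x \<le> s"
      then have "x > 0" using crit(1) by simp
      have "h x \<ge> 0"
        unfolding h_def using x by (intro crit(3)) auto
      then have "x powr (-2 * H - 1) * h x \<ge> 0"
        by simp
      then show "\<exists>y. DERIV g x :> y \<and> y \<ge> 0"
        using dg[OF \<open>x > 0\<close>] by blast
    qed
  qed
  then show ?thesis unfolding g_def .
qed

lemma best_response_gain_optimal: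
  fixes b c q r H K k :: real
  assumes b: "b \<noteq> 0" and q: "q > 0" and r: "r > 0" and H: "0 < H" "H < 1"
    and K: "K = - (c + sqrt (c\<^sup>2 + 4 * H * (1 - H) * b\<^sup>2 * q / r)) / (2 * b * (1 - H))"
    and k: "c + b * k < 0"
  shows "(q + r * K\<^sup>2) * (- (c + b * K)) powr (-2 * H) \<le> (q + r * k\<^sup>2) * (- (c + b * k)) powr (-2 * H)"
proof -
  define A where "A = b\<^sup>2 * q / r"
  have A: "A > 0" unfolding A_def using b q r by simp
  have s0: "- (c + b * K) = ((2 * H - 1) * c + sqrt (c\<^sup>2 + 4 * H * (1 - H) * A)) / (2 * (1 - H))"
    unfolding K A_def using b H by (simp add: field_simps)
  have cost: "q + r * k'\<^sup>2 = (r / b\<^sup>2) * (A + (c + (- (c + b * k')))\<^sup>2)" for k'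
    unfolding A_def using b r by (simp add: field_simps power2_eq_square)
  have "(A + (c + (- (c + b * K)))\<^sup>2) * (- (c + b * K)) powr (-2 * H)
      \<le> (A + (c + (- (c + b * k)))\<^sup>2) * (- (c + b * k)) powr (-2 * H)"
    unfolding s0 by (rule quadratic_powr_minimum[OF A H]) (use k in simp)
  then show ?thesis
    unfolding cost mult.assoc using r by (intro mult_left_mono) auto
qed

section \<open>Processes with the covariance of fractional Brownian motion\<close>

definition frac_cov :: "real \<Rightarrow> real \<Rightarrow> real \<Rightarrow> real" where
  "frac_cov H s t = (s powr (2*H) + t powr (2*H) - \<bar>t - s\<bar> powr (2*H)) / 2"

lemma frac_cov_diag: "frac_cov H t t = t powr (2*H)"
  unfolding frac_cov_def by simp

lemma frac_cov_rescale:
  assumes l: "l > 0"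
  shows "l powr (2 * H) * frac_cov H (s / l) (t / l) = frac_cov H s t"
proof -
  have "\<bar>t / l - s / l\<bar> = \<bar>t - s\<bar> / l" using l by (simp add: diff_divide_distrib[symmetric])
  then show ?thesis
    unfolding frac_cov_def using l by (simp add: powr_divide field_simps)
qed

definition path_functional_moment :: "real \<Rightarrow> (real \<Rightarrow> real) \<Rightarrow> real \<Rightarrow> real" where
  "path_functional_moment H g t =
     frac_cov H t t + 2 * (LINT s:{0..t}|lborel. g s * frac_cov H t s)
     + (LINT s:{0..t}|lborel. g s * (LINT u:{0..t}|lborel. g u * frac_cov H s u))"

lemma rosenblatt_second_order_rescale:
  assumes R: "rosenblatt_second_order M H R" and l: "l > 0"
  shows "rosenblatt_second_order M H (\<lambda>s \<omega>. l powr H * R (s / l) \<omega>)"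
proof -
  have meas: "\<And>t. R t \<in> borel_measurable M"
    and zero: "\<And>\<omega>. \<omega> \<in> space M \<Longrightarrow> R 0 \<omega> = 0"
    and cont: "\<And>\<omega>. \<omega> \<in> space M \<Longrightarrow> continuous_on {0..} (\<lambda>t. R t \<omega>)"
    and sq: "\<And>t. t \<ge> 0 \<Longrightarrow> integrable M (\<lambda>\<omega>. (R t \<omega>)\<^sup>2)"
    and mean: "\<And>t. t \<ge> 0 \<Longrightarrow> (\<integral>\<omega>. R t \<omega> \<partial>M) = 0"
    and cov: "\<And>s t. s \<ge> 0 \<Longrightarrow> t \<ge> 0 \<Longrightarrow> (\<integral>\<omega>. R s \<omega> * R t \<omega> \<partial>M) = frac_cov H s t"
    using R unfolding rosenblatt_second_order_def frac_cov_def by blast+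
  show ?thesis
    unfolding rosenblatt_second_order_def frac_cov_def[symmetric]
  proof (intro conjI allI impI ballI)
    fix t show "(\<lambda>\<omega>. l powr H * R (t / l) \<omega>) \<in> borel_measurable M"
      using meas by simp
  next
    fix \<omega> assume \<omega>: "\<omega> \<in> space M"
    show "l powr H * R (0 / l) \<omega> = 0"
      using zero[OF \<omega>] by simp
    have "continuous_on {0..} (\<lambda>t. R (t / l) \<omega>)"
      by (rule continuous_on_compose2[OF cont[OF \<omega>], of _ "\<lambda>t. t / l"]) (use l in \<open>auto intro!: continuous_intros\<close>)
    then show "continuous_on {0..} (\<lambda>t. l powr H * R (t / l) \<omega>)"
      by (rule continuous_on_mult_left)
  next
    fix t :: real assume "t \<ge> 0"
    then have t: "t / l \<ge> 0" using l by simp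
    show "integrable M (\<lambda>\<omega>. (l powr H * R (t / l) \<omega>)\<^sup>2)"
      using sq[OF t] by (simp add: power_mult_distrib)
    show "(\<integral>\<omega>. l powr H * R (t / l) \<omega> \<partial>M) = 0"
      using mean[OF t] by simp
  next
    fix s t :: real assume "s \<ge> 0" "t \<ge> 0"
    then have st: "s / l \<ge> 0" "t / l \<ge> 0" using l by auto
    have "(\<lambda>\<omega>. l powr H * R (s / l) \<omega> * (l powr H * R (t / l) \<omega>))
        = (\<lambda>\<omega>. (l powr H * l powr H) * (R (s / l) \<omega> * R (t / l) \<omega>))"
      by (rule ext) (simp only: mult.assoc mult.commute mult.left_commute)
    moreover have "l powr H * l powr H = l powr (2 * H)"
      by (simp flip: powr_add)
    ultimately show "(\<integral>\<omega>. l powr H * R (s / l) \<omega> * (l powr H * R (t / l) \<omega>) \<partial>M) = frac_cov H s t"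
      using cov[OF st] frac_cov_rescale[OF l] by simp
  qed
qed

locale fractional_covariance_process = prob_space M for M :: "'w measure" +
  fixes H :: real and R :: "real \<Rightarrow> 'w \<Rightarrow> real"
  assumes second_order: "rosenblatt_second_order M H R" and H_pos: "0 < H"
begin

sublocale pair_lborel: pair_sigma_finite M lborel
  by (simp add: lborel.sigma_finite_measure_axioms pair_sigma_finite.intro sigma_finite_measure_axioms)

lemma R_measurable[measurable]: "R t \<in> borel_measurable M"
  using second_order unfolding rosenblatt_second_order_def by blast

lemma R_continuous: "\<omega> \<in> space M \<Longrightarrow> continuous_on {0..} (\<lambda>t. R t \<omega>)"
  using second_order unfolding rosenblatt_second_order_def by blast

lemma R_continuous_Icc: "\<omega> \<in> space M \<Longrightarrow> continuous_on {0..b} (\<lambda>t. R t \<omega>)"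
  using R_continuous by (rule continuous_on_subset) auto

lemma R_square_integrable: "t \<ge> 0 \<Longrightarrow> integrable M (\<lambda>\<omega>. (R t \<omega>)\<^sup>2)"
  using second_order unfolding rosenblatt_second_order_def by blast

lemma R_integrable: "t \<ge> 0 \<Longrightarrow> integrable M (R t)"
  by (rule square_integrable_imp_integrable[OF R_measurable R_square_integrable])

lemma R_mean: "t \<ge> 0 \<Longrightarrow> (\<integral>\<omega>. R t \<omega> \<partial>M) = 0"
  using second_order unfolding rosenblatt_second_order_def by blast

lemma R_cov: "s \<ge> 0 \<Longrightarrow> t \<ge> 0 \<Longrightarrow> (\<integral>\<omega>. R s \<omega> * R t \<omega> \<partial>M) = frac_cov H s t"
  using second_order unfolding rosenblatt_second_order_def frac_cov_def by blast

lemma R_second_moment: "t \<ge> 0 \<Longrightarrow> (\<integral>\<omega>. (R t \<omega>)\<^sup>2 \<partial>M) = t powr (2*H)"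
  using R_cov[of t t] by (simp add: power2_eq_square frac_cov_diag)

lemma R_measurable_pair[measurable]: "(\<lambda>(\<omega>,s). R (max 0 s) \<omega>) \<in> borel_measurable (M \<Otimes>\<^sub>M lborel)"
  by (rule continuous_process_measurable_pair) (auto intro: R_continuous_Icc)

lemma rescaled: "l > 0 \<Longrightarrow> fractional_covariance_process M H (\<lambda>s \<omega>. l powr H * R (s / l) \<omega>)"
  by unfold_locales (simp_all add: rosenblatt_second_order_rescale second_order H_pos)

lemma nn_integral_R_square_le:
  assumes "0 \<le> s" "s \<le> t"
  shows "(\<integral>\<^sup>+\<omega>. ennreal ((R s \<omega>)\<^sup>2) \<partial>M) \<le> ennreal (t powr (2*H))"
  using assms H_pos
  by (simp add: nn_integral_eq_integral R_square_integrable R_second_moment ennreal_leI powr_mono2)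

lemma nn_integral_abs_mult_R_le:
  assumes [measurable]: "W \<in> borel_measurable M" and W2: "integrable M (\<lambda>\<omega>. (W \<omega>)\<^sup>2)"
    and s: "0 \<le> s" "s \<le> t"
  shows "(\<integral>\<^sup>+\<omega>. ennreal \<bar>W \<omega> * R s \<omega>\<bar> \<partial>M) \<le> ennreal (((\<integral>\<omega>. (W \<omega>)\<^sup>2 \<partial>M) + t powr (2*H)) / 2)"
proof -
  have "\<bar>W \<omega> * R s \<omega>\<bar> \<le> ((W \<omega>)\<^sup>2 + (R s \<omega>)\<^sup>2) / 2" for \<omega>
    using sum_squares_bound[of "\<bar>W \<omega>\<bar>" "\<bar>R s \<omega>\<bar>"] by (simp add: abs_mult)
  then have "(\<integral>\<^sup>+\<omega>. ennreal \<bar>W \<omega> * R s \<omega>\<bar> \<partial>M) \<le> (\<integral>\<^sup>+\<omega>. ennreal (((W \<omega>)\<^sup>2 + (R s \<omega>)\<^sup>2) / 2) \<partial>M)"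
    by (intro nn_integral_mono ennreal_leI)
  also have "\<dots> = ennreal (((\<integral>\<omega>. (W \<omega>)\<^sup>2 \<partial>M) + s powr (2*H)) / 2)"
    using W2 R_square_integrable[OF s(1)] R_second_moment[OF s(1)] by (simp add: nn_integral_eq_integral)
  also have "\<dots> \<le> ennreal (((\<integral>\<omega>. (W \<omega>)\<^sup>2 \<partial>M) + t powr (2*H)) / 2)"
    using s H_pos by (intro ennreal_leI divide_right_mono add_left_mono powr_mono2) auto
  finally show ?thesis .
qed

lemma path_integrand_integrable:
  assumes t: "t \<ge> 0" and gc: "continuous_on UNIV g"
    and [measurable]: "W \<in> borel_measurable M" and W2: "integrable M (\<lambda>\<omega>. (W \<omega>)\<^sup>2)"
  shows "integrable (M \<Otimes>\<^sub>M lborel) (\<lambda>(\<omega>, s). indicator {0..t} s * (g s * (W \<omega> * R (max 0 s) \<omega>)))"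
proof (rule integrableI_bounded)
  have [measurable]: "g \<in> borel_measurable borel" by (rule borel_measurable_continuous_onI[OF gc])
  show "(\<lambda>(\<omega>, s). indicator {0..t} s * (g s * (W \<omega> * R (max 0 s) \<omega>))) \<in> borel_measurable (M \<Otimes>\<^sub>M lborel)"
    by measurable
  obtain G where G: "G \<ge> 0" "\<And>s. s \<in> {0..t} \<Longrightarrow> \<bar>g s\<bar> \<le> G"
    using continuous_on_Icc_abs_bound[OF continuous_on_subset[OF gc subset_UNIV]] by blast
  define C where "C = ((\<integral>\<omega>. (W \<omega>)\<^sup>2 \<partial>M) + t powr (2*H)) / 2"
  have C: "C \<ge> 0" unfolding C_def by simp
  have "(\<integral>\<^sup>+\<omega>. ennreal (norm (indicator {0..t} s * (g s * (W \<omega> * R (max 0 s) \<omega>)))) \<partial>M)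
      \<le> ennreal (G * C) * indicator {0..t} s" for s
  proof (cases "s \<in> {0..t}")
    case True
    have "(\<integral>\<^sup>+\<omega>. ennreal (norm (indicator {0..t} s * (g s * (W \<omega> * R (max 0 s) \<omega>)))) \<partial>M)
        \<le> (\<integral>\<^sup>+\<omega>. ennreal G * ennreal \<bar>W \<omega> * R s \<omega>\<bar> \<partial>M)"
      using True G by (intro nn_integral_mono) (auto simp: abs_mult ennreal_mult[symmetric] intro!: ennreal_leI mult_right_mono)
    also have "\<dots> = ennreal G * (\<integral>\<^sup>+\<omega>. ennreal \<bar>W \<omega> * R s \<omega>\<bar> \<partial>M)"
      by (rule nn_integral_cmult) measurable
    also have "\<dots> \<le> ennreal G * ennreal C"
      unfolding C_def using True W2 by (intro mult_left_mono nn_integral_abs_mult_R_le) auto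
    finally show ?thesis using True G C by (simp add: ennreal_mult)
  qed simp
  then have "(\<integral>\<^sup>+z. ennreal (norm (case z of (\<omega>, s) \<Rightarrow> indicator {0..t} s * (g s * (W \<omega> * R (max 0 s) \<omega>)))) \<partial>(M \<Otimes>\<^sub>M lborel))
      \<le> (\<integral>\<^sup>+s. ennreal (G * C) * indicator {0..t} s \<partial>lborel)"
    by (subst pair_lborel.nn_integral_snd[symmetric]) (auto simp: case_prod_beta intro!: nn_integral_mono)
  also have "\<dots> < \<infinity>"
    using t by (simp add: nn_integral_cmult_indicator ennreal_mult_less_top)
  finally show "(\<integral>\<^sup>+z. ennreal (norm (case z of (\<omega>, s) \<Rightarrow> indicator {0..t} s * (g s * (W \<omega> * R (max 0 s) \<omega>)))) \<partial>(M \<Otimes>\<^sub>M lborel)) < \<infinity>" .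
qed

lemma path_integral_Fubini:
  fixes W :: "'w \<Rightarrow> real" and g :: "real \<Rightarrow> real"
  assumes t: "t \<ge> 0" and gc: "continuous_on UNIV g"
    and W[measurable]: "W \<in> borel_measurable M" and W2: "integrable M (\<lambda>\<omega>. (W \<omega>)\<^sup>2)"
  shows "integrable M (\<lambda>\<omega>. W \<omega> * (LINT s:{0..t}|lborel. g s * R s \<omega>))"
    and "(\<integral>\<omega>. W \<omega> * (LINT s:{0..t}|lborel. g s * R s \<omega>) \<partial>M) = (LINT s:{0..t}|lborel. g s * (\<integral>\<omega>. W \<omega> * R s \<omega> \<partial>M))"
proof -
  define F where "F = (\<lambda>\<omega> s. indicator {0..t} s * (g s * (W \<omega> * R (max 0 s) \<omega>)))"
  have intF: "integrable (M \<Otimes>\<^sub>M lborel) (\<lambda>(\<omega>, s). F \<omega> s)"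
    unfolding F_def by (rule path_integrand_integrable[OF t gc W W2])
  have inner_s: "(\<integral>s. F \<omega> s \<partial>lborel) = W \<omega> * (LINT s:{0..t}|lborel. g s * R s \<omega>)" for \<omega>
  proof -
    have "(\<integral>s. F \<omega> s \<partial>lborel) = (\<integral>s. W \<omega> * (indicator {0..t} s * (g s * R s \<omega>)) \<partial>lborel)"
      by (rule Bochner_Integration.integral_cong) (auto simp: F_def split: split_indicator)
    then show ?thesis unfolding set_integral_Icc_real by simp
  qed
  have inner_\<omega>: "(\<integral>\<omega>. F \<omega> s \<partial>M) = indicator {0..t} s * (g s * (\<integral>\<omega>. W \<omega> * R s \<omega> \<partial>M))" for s
    by (cases "s \<in> {0..t}") (auto simp: F_def)
  show "integrable M (\<lambda>\<omega>. W \<omega> * (LINT s:{0..t}|lborel. g s * R s \<omega>))"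
    using pair_lborel.integrable_fst[OF intF] by (simp add: inner_s)
  have "(\<integral>\<omega>. (\<integral>s. F \<omega> s \<partial>lborel) \<partial>M) = (\<integral>s. (\<integral>\<omega>. F \<omega> s \<partial>M) \<partial>lborel)"
    using pair_lborel.integral_fst[OF intF] pair_lborel.integral_snd[of "\<lambda>\<omega> s. F \<omega> s"] intF by simp
  then show "(\<integral>\<omega>. W \<omega> * (LINT s:{0..t}|lborel. g s * R s \<omega>) \<partial>M) = (LINT s:{0..t}|lborel. g s * (\<integral>\<omega>. W \<omega> * R s \<omega> \<partial>M))"
    by (simp add: inner_s inner_\<omega> set_integral_Icc_real)
qed

lemma path_integral_measurable:
  assumes gc: "continuous_on UNIV g"
  shows "(\<lambda>\<omega>. (LINT s:{0..t}|lborel. g s * R s \<omega>)) \<in> borel_measurable M"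
proof -
  have [measurable]: "g \<in> borel_measurable borel" by (rule borel_measurable_continuous_onI[OF gc])
  have e: "(\<lambda>\<omega>. (LINT s:{0..t}|lborel. g s * R s \<omega>)) = (\<lambda>\<omega>. \<integral>s. indicator {0..t} s * (g s * R (max 0 s) \<omega>) \<partial>lborel)"
    unfolding set_integral_Icc_real by (intro ext Bochner_Integration.integral_cong) (auto split: split_indicator)
  show ?thesis unfolding e
    by (rule lborel.borel_measurable_lebesgue_integral) measurable
qed

lemma path_square_integrable:
  assumes t: "t \<ge> 0"
  shows "integrable M (\<lambda>\<omega>. \<integral>s. indicator {0..t} s * (R (max 0 s) \<omega>)\<^sup>2 \<partial>lborel)"
proof (rule integrableI_nonneg)
  show "(\<lambda>\<omega>. \<integral>s. indicator {0..t} s * (R (max 0 s) \<omega>)\<^sup>2 \<partial>lborel) \<in> borel_measurable M"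
    by (rule lborel.borel_measurable_lebesgue_integral) measurable
  show "AE \<omega> in M. 0 \<le> (\<integral>s. indicator {0..t} s * (R (max 0 s) \<omega>)\<^sup>2 \<partial>lborel)"
    by simp
  have "integrable lborel (\<lambda>s. indicator {0..t} s * (R (max 0 s) \<omega>)\<^sup>2)" if "\<omega> \<in> space M" for \<omega>
  proof -
    have "continuous_on {0..t} (\<lambda>s. (R (max 0 s) \<omega>)\<^sup>2)"
      using R_continuous_Icc[OF that, of t] by (intro continuous_intros) (auto elim: continuous_on_eq)
    from borel_integrable_atLeastAtMost'[OF this] show ?thesis
      unfolding set_integrable_def by simp
  qed
  then have "(\<integral>\<^sup>+\<omega>. ennreal (\<integral>s. indicator {0..t} s * (R (max 0 s) \<omega>)\<^sup>2 \<partial>lborel) \<partial>M)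
      = (\<integral>\<^sup>+\<omega>. (\<integral>\<^sup>+s. ennreal ((R (max 0 s) \<omega>)\<^sup>2) * indicator {0..t} s \<partial>lborel) \<partial>M)"
    by (intro nn_integral_cong) (simp add: nn_integral_eq_integral[symmetric] ennreal_mult' ennreal_indicator mult.commute)
  also have "\<dots> = (\<integral>\<^sup>+s. (\<integral>\<^sup>+\<omega>. ennreal ((R (max 0 s) \<omega>)\<^sup>2) * indicator {0..t} s \<partial>M) \<partial>lborel)"
    by (rule pair_lborel.Fubini'[symmetric]) measurable
  also have "\<dots> \<le> (\<integral>\<^sup>+s. ennreal (t powr (2*H)) * indicator {0..t} s \<partial>lborel)"
    by (intro nn_integral_mono) (auto simp: nn_integral_multc nn_integral_R_square_le split: split_indicator)
  also have "\<dots> < \<infinity>"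
    using t by (simp add: nn_integral_cmult_indicator ennreal_mult_less_top)
  finally show "(\<integral>\<^sup>+\<omega>. ennreal (\<integral>s. indicator {0..t} s * (R (max 0 s) \<omega>)\<^sup>2 \<partial>lborel) \<partial>M) < \<infinity>" .
qed

lemma path_integral_square_integrable:
  assumes t: "t \<ge> 0" and gc: "continuous_on UNIV g"
  shows "integrable M (\<lambda>\<omega>. (LINT s:{0..t}|lborel. g s * R s \<omega>)\<^sup>2)"
proof -
  obtain G where G: "G \<ge> 0" "\<And>s. s \<in> {0..t} \<Longrightarrow> \<bar>g s\<bar> \<le> G"
    using continuous_on_Icc_abs_bound[OF continuous_on_subset[OF gc subset_UNIV]] by blast
  have "(LINT s:{0..t}|lborel. g s * R s \<omega>)\<^sup>2 \<le> t * G\<^sup>2 * (\<integral>s. indicator {0..t} s * (R (max 0 s) \<omega>)\<^sup>2 \<partial>lborel)"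
    if "\<omega> \<in> space M" for \<omega>
  proof -
    have "(LINT s:{0..t}|lborel. g s * R s \<omega>)\<^sup>2 \<le> t * G\<^sup>2 * (LINT s:{0..t}|lborel. (R s \<omega>)\<^sup>2)"
      using G(2) t by (intro set_integral_mult_square_le R_continuous_Icc[OF that] continuous_on_subset[OF gc]) auto
    also have "(LINT s:{0..t}|lborel. (R s \<omega>)\<^sup>2) = (\<integral>s. indicator {0..t} s * (R (max 0 s) \<omega>)\<^sup>2 \<partial>lborel)"
      unfolding set_integral_Icc_real by (intro Bochner_Integration.integral_cong) (auto split: split_indicator)
    finally show ?thesis .
  qed
  note bound = this
  show ?thesis
  proof (rule Bochner_Integration.integrable_bound)
    show "integrable M (\<lambda>\<omega>. t * G\<^sup>2 * (\<integral>s. indicator {0..t} s * (R (max 0 s) \<omega>)\<^sup>2 \<partial>lborel))"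
      using path_square_integrable[OF t] by simp
    show "(\<lambda>\<omega>. (LINT s:{0..t}|lborel. g s * R s \<omega>)\<^sup>2) \<in> borel_measurable M"
      using path_integral_measurable[OF gc] by measurable
    show "AE \<omega> in M. norm ((LINT s:{0..t}|lborel. g s * R s \<omega>)\<^sup>2)
        \<le> norm (t * G\<^sup>2 * (\<integral>s. indicator {0..t} s * (R (max 0 s) \<omega>)\<^sup>2 \<partial>lborel))"
      using bound by (intro AE_I2) (simp add: order_trans[OF _ abs_ge_self])
  qed
qed

lemma path_integral_mean:
  assumes t: "t \<ge> 0" and gc: "continuous_on UNIV g"
  shows "integrable M (\<lambda>\<omega>. LINT s:{0..t}|lborel. g s * R s \<omega>)"
    and "(\<integral>\<omega>. (LINT s:{0..t}|lborel. g s * R s \<omega>) \<partial>M) = 0"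
proof -
  have one: "integrable M (\<lambda>\<omega>. ((\<lambda>_. 1::real) \<omega>)\<^sup>2)" by simp
  note Fubini = path_integral_Fubini[OF t gc _ one]
  show "integrable M (\<lambda>\<omega>. LINT s:{0..t}|lborel. g s * R s \<omega>)"
    using Fubini(1) by simp
  have "(\<integral>\<omega>. (LINT s:{0..t}|lborel. g s * R s \<omega>) \<partial>M) = (LINT s:{0..t}|lborel. g s * (\<integral>\<omega>. R s \<omega> \<partial>M))"
    using Fubini(2) by simp
  also have "\<dots> = 0"
    by (subst set_integral_Icc_cong[where g="\<lambda>_. 0"]) (simp_all add: R_mean)
  finally show "(\<integral>\<omega>. (LINT s:{0..t}|lborel. g s * R s \<omega>) \<partial>M) = 0" .
qed

lemma path_integral_cov:
  assumes t: "t \<ge> 0" and gc: "continuous_on UNIV g" and s: "s \<ge> 0"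
  shows "integrable M (\<lambda>\<omega>. R s \<omega> * (LINT u:{0..t}|lborel. g u * R u \<omega>))"
    and "(\<integral>\<omega>. R s \<omega> * (LINT u:{0..t}|lborel. g u * R u \<omega>) \<partial>M) = (LINT u:{0..t}|lborel. g u * frac_cov H s u)"
proof -
  note Fubini = path_integral_Fubini[OF t gc R_measurable R_square_integrable[OF s]]
  show "integrable M (\<lambda>\<omega>. R s \<omega> * (LINT u:{0..t}|lborel. g u * R u \<omega>))"
    by (rule Fubini(1))
  show "(\<integral>\<omega>. R s \<omega> * (LINT u:{0..t}|lborel. g u * R u \<omega>) \<partial>M) = (LINT u:{0..t}|lborel. g u * frac_cov H s u)"
    unfolding Fubini(2) using s by (intro set_integral_Icc_cong) (simp add: R_cov)
qed

lemma path_integral_second_moment: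
  assumes t: "t \<ge> 0" and gc: "continuous_on UNIV g"
  shows "(\<integral>\<omega>. (LINT s:{0..t}|lborel. g s * R s \<omega>)\<^sup>2 \<partial>M)
       = (LINT s:{0..t}|lborel. g s * (LINT u:{0..t}|lborel. g u * frac_cov H s u))"
proof -
  define Y where "Y \<omega> = (LINT s:{0..t}|lborel. g s * R s \<omega>)" for \<omega>
  have [measurable]: "Y \<in> borel_measurable M"
    unfolding Y_def[abs_def] by (rule path_integral_measurable[OF gc])
  have "(\<integral>\<omega>. (Y \<omega>)\<^sup>2 \<partial>M) = (\<integral>\<omega>. Y \<omega> * Y \<omega> \<partial>M)"
    by (simp add: power2_eq_square)
  also have "\<dots> = (LINT s:{0..t}|lborel. g s * (\<integral>\<omega>. Y \<omega> * R s \<omega> \<partial>M))"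
    unfolding Y_def by (intro path_integral_Fubini(2) t gc path_integral_square_integrable path_integral_measurable)
  also have "\<dots> = (LINT s:{0..t}|lborel. g s * (LINT u:{0..t}|lborel. g u * frac_cov H s u))"
    using path_integral_cov(2)[OF t gc] unfolding Y_def by (intro set_integral_Icc_cong) (simp add: mult.commute)
  finally show ?thesis unfolding Y_def .
qed

lemma path_functional_moments:
  assumes t: "t \<ge> 0" and gc: "continuous_on UNIV g"
  shows "(\<lambda>\<omega>. R t \<omega> + (LINT s:{0..t}|lborel. g s * R s \<omega>)) \<in> borel_measurable M"
    and "integrable M (\<lambda>\<omega>. (R t \<omega> + (LINT s:{0..t}|lborel. g s * R s \<omega>))\<^sup>2)"
    and "integrable M (\<lambda>\<omega>. R t \<omega> + (LINT s:{0..t}|lborel. g s * R s \<omega>))"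
    and "(\<integral>\<omega>. R t \<omega> + (LINT s:{0..t}|lborel. g s * R s \<omega>) \<partial>M) = 0"
    and "(\<integral>\<omega>. (R t \<omega> + (LINT s:{0..t}|lborel. g s * R s \<omega>))\<^sup>2 \<partial>M) = path_functional_moment H g t"
proof -
  define Y where "Y \<omega> = (LINT s:{0..t}|lborel. g s * R s \<omega>)" for \<omega>
  have [measurable]: "Y \<in> borel_measurable M"
    unfolding Y_def[abs_def] by (rule path_integral_measurable[OF gc])
  note mean = path_integral_mean[OF t gc, folded Y_def]
  note cov = path_integral_cov[OF t gc t, folded Y_def]
  have Y2: "integrable M (\<lambda>\<omega>. (Y \<omega>)\<^sup>2)"
    unfolding Y_def by (rule path_integral_square_integrable[OF t gc])
  have sq: "(R t \<omega> + Y \<omega>)\<^sup>2 = (R t \<omega>)\<^sup>2 + 2 * (R t \<omega> * Y \<omega>) + (Y \<omega>)\<^sup>2" for \<omega>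
    by (simp add: power2_eq_square algebra_simps)
  show "(\<lambda>\<omega>. R t \<omega> + Y \<omega>) \<in> borel_measurable M"
    by measurable
  show "integrable M (\<lambda>\<omega>. (R t \<omega> + Y \<omega>)\<^sup>2)"
    unfolding sq using R_square_integrable[OF t] cov(1) Y2 by simp
  show "integrable M (\<lambda>\<omega>. R t \<omega> + Y \<omega>)"
    using R_integrable[OF t] mean(1) by simp
  show "(\<integral>\<omega>. R t \<omega> + Y \<omega> \<partial>M) = 0"
    using R_integrable[OF t] mean R_mean[OF t] by simp
  have "(\<integral>\<omega>. (R t \<omega> + Y \<omega>)\<^sup>2 \<partial>M) = (\<integral>\<omega>. (R t \<omega>)\<^sup>2 \<partial>M) + 2 * (\<integral>\<omega>. R t \<omega> * Y \<omega> \<partial>M) + (\<integral>\<omega>. (Y \<omega>)\<^sup>2 \<partial>M)"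
    unfolding sq using R_square_integrable[OF t] cov(1) Y2 by simp
  then show "(\<integral>\<omega>. (R t \<omega> + Y \<omega>)\<^sup>2 \<partial>M) = path_functional_moment H g t"
    unfolding path_functional_moment_def cov(2) R_second_moment[OF t] frac_cov_diag
      path_integral_second_moment[OF t gc, folded Y_def] .
qed

end

section \<open>The closed-loop Ornstein--Uhlenbeck state\<close>

definition ou_noise :: "(real \<Rightarrow> 'w \<Rightarrow> real) \<Rightarrow> real \<Rightarrow> real \<Rightarrow> 'w \<Rightarrow> real" where
  "ou_noise R a t \<omega> = R t \<omega> + a * exp (a * t) * integral {0..t} (\<lambda>s. exp (- (a * s)) * R s \<omega>)"

definition ou_state :: "(real \<Rightarrow> 'w \<Rightarrow> real) \<Rightarrow> real \<Rightarrow> real \<Rightarrow> real \<Rightarrow> 'w \<Rightarrow> real" where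
  "ou_state R a x0 t \<omega> = exp (a * t) * x0 + ou_noise R a t \<omega>"

definition ou_kernel :: "real \<Rightarrow> real \<Rightarrow> real \<Rightarrow> real" where
  "ou_kernel a t s = a * exp (a * t) * exp (- (a * s))"

lemma ou_kernel_continuous: "continuous_on UNIV (ou_kernel a t)"
  unfolding ou_kernel_def by (intro continuous_intros)

lemma ou_noise_continuous:
  assumes "continuous_on {0..} (\<lambda>t. R t \<omega>)" "b \<ge> 0"
  shows "continuous_on {0..b} (\<lambda>t. ou_noise R a t \<omega>)"
  using variation_of_constants_solves(1)[OF assms, of a 0] by (simp add: ou_noise_def)

lemma ou_state_continuous:
  assumes "continuous_on {0..} (\<lambda>t. R t \<omega>)" "b \<ge> 0"
  shows "continuous_on {0..b} (\<lambda>t. ou_state R a x0 t \<omega>)"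
  unfolding ou_state_def by (intro continuous_intros ou_noise_continuous assms)

lemma ou_state_solves:
  assumes "continuous_on {0..} (\<lambda>t. R t \<omega>)" "t \<ge> 0"
  shows "(\<lambda>s. ou_state R a x0 s \<omega>) integrable_on {0..t}"
    and "ou_state R a x0 t \<omega> = x0 + integral {0..t} (\<lambda>s. a * ou_state R a x0 s \<omega>) + R t \<omega>"
  using variation_of_constants_solves(2,3)[OF assms, of a x0] by (simp_all add: ou_state_def ou_noise_def add.assoc)

lemma ou_state_unique:
  assumes "continuous_on {0..} (\<lambda>t. R t \<omega>)"
    and "\<And>t. t \<ge> 0 \<Longrightarrow> f integrable_on {0..t} \<and> f t = x0 + integral {0..t} (\<lambda>s. a * f s) + R t \<omega>"
    and "t \<ge> 0"
  shows "f t = ou_state R a x0 t \<omega>"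
  using variation_of_constants_unique[OF assms] by (simp add: ou_state_def ou_noise_def add.assoc)

lemma ou_noise_rescale:
  fixes R :: "real \<Rightarrow> 'w \<Rightarrow> real"
  assumes l: "l > 0"
  shows "ou_noise (\<lambda>s \<omega>. l powr H * R (s / l) \<omega>) (-1) (l * t) \<omega> = l powr H * ou_noise R (- l) t \<omega>"
proof -
  define J where "J = integral {0..t} (\<lambda>x. exp (l * x) * R x \<omega>)"
  have img: "(\<lambda>x. x / l) ` {0..l * t} = {0..t}"
  proof (cases "t \<ge> 0")
    case True
    then show ?thesis using l by (simp add: image_divide_atLeastAtMost)
  next
    case False
    then have "l * t < 0" using l by (simp add: mult_pos_neg)
    then show ?thesis using False by simp
  qed
  have st: "integral ((\<lambda>x. x / l) ` {0..l * t}) (\<lambda>x. exp (l * x) * R (l * x / l) \<omega>)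
      = (1 / \<bar>l\<bar>) *\<^sub>R integral {0..l * t} (\<lambda>x. exp x * R (x / l) \<omega>)"
    by (rule integral_stretch_real) (use l in simp)
  have st2: "(\<lambda>x. exp (l * x) * R (l * x / l) \<omega>) = (\<lambda>x. exp (l * x) * R x \<omega>)"
    using l by (simp add: fun_eq_iff)
  have i2: "integral {0..l * t} (\<lambda>x. exp x * R (x / l) \<omega>) = l * J"
    using st l unfolding img st2 J_def by (simp add: field_simps)
  have f1: "(\<lambda>s. exp (- (- 1 * s)) * (l powr H * R (s / l) \<omega>)) = (\<lambda>s. l powr H *\<^sub>R (exp s * R (s / l) \<omega>))"
    by (simp add: fun_eq_iff)
  have i1: "integral {0..l * t} (\<lambda>s. exp (- (- 1 * s)) * (l powr H * R (s / l) \<omega>)) = l powr H * (l * J)"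
    unfolding f1 integral_cmul i2 by simp
  have i3: "integral {0..t} (\<lambda>s. exp (- (- l * s)) * R s \<omega>) = J"
    unfolding J_def by simp
  have alg: "A * B - C * (A * (l * J)) = A * (B - l * C * J)" for A B C :: real
    by (simp add: algebra_simps)
  have e: "exp (- 1 * (l * t)) = exp (- l * t)" by simp
  show ?thesis
    unfolding ou_noise_def i1 i3 e using l by (simp add: alg)
qed

context fractional_covariance_process
begin

lemma ou_noise_eq_path_functional:
  assumes \<omega>: "\<omega> \<in> space M"
  shows "ou_noise R a t \<omega> = R t \<omega> + (LINT s:{0..t}|lborel. ou_kernel a t s * R s \<omega>)"
proof -
  have c: "continuous_on {0..t} (\<lambda>s. exp (- (a * s)) * R s \<omega>)"
    by (intro continuous_intros R_continuous_Icc[OF \<omega>])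
  have "(LINT s:{0..t}|lborel. ou_kernel a t s * R s \<omega>) = a * exp (a * t) * (LINT s:{0..t}|lborel. exp (- (a * s)) * R s \<omega>)"
    unfolding ou_kernel_def by (simp flip: set_integral_mult_right add: mult.assoc)
  then show ?thesis unfolding ou_noise_def set_integral_Icc_eq_integral[OF c] by simp
qed

lemma ou_noise_moments:
  assumes t: "t \<ge> 0"
  shows "ou_noise R a t \<in> borel_measurable M"
    and "integrable M (\<lambda>\<omega>. (ou_noise R a t \<omega>)\<^sup>2)"
    and "integrable M (ou_noise R a t)"
    and "(\<integral>\<omega>. ou_noise R a t \<omega> \<partial>M) = 0"
    and "(\<integral>\<omega>. (ou_noise R a t \<omega>)\<^sup>2 \<partial>M) = path_functional_moment H (ou_kernel a t) t"
  using path_functional_moments[OF t ou_kernel_continuous[of a t]]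
  by (simp_all add: ou_noise_eq_path_functional
      cong: measurable_cong Bochner_Integration.integrable_cong Bochner_Integration.integral_cong)

lemma ou_noise_second_moment_rescale:
  assumes l: "l > 0" and t: "t \<ge> 0"
  shows "(\<integral>\<omega>. (ou_noise R (- l) t \<omega>)\<^sup>2 \<partial>M) = l powr (-2 * H) * (\<integral>\<omega>. (ou_noise R (-1) (l * t) \<omega>)\<^sup>2 \<partial>M)"
proof -
  \<comment> \<open>The second moment depends on the covariance only, which the rescaled process shares with R.\<close>
  interpret rescaled: fractional_covariance_process M H "\<lambda>s \<omega>. l powr H * R (s / l) \<omega>"
    by (rule rescaled[OF l])
  have lt: "l * t \<ge> 0" using l t by simp
  have "(l powr H)\<^sup>2 = l powr (2 * H)"
    by (simp add: power2_eq_square flip: powr_add)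
  then have "l powr (2 * H) * (\<integral>\<omega>. (ou_noise R (- l) t \<omega>)\<^sup>2 \<partial>M)
      = (\<integral>\<omega>. (ou_noise (\<lambda>s \<omega>. l powr H * R (s / l) \<omega>) (-1) (l * t) \<omega>)\<^sup>2 \<partial>M)"
    by (simp add: ou_noise_rescale[OF l] power_mult_distrib)
  also have "\<dots> = (\<integral>\<omega>. (ou_noise R (-1) (l * t) \<omega>)\<^sup>2 \<partial>M)"
    unfolding rescaled.ou_noise_moments(5)[OF lt] ou_noise_moments(5)[OF lt] ..
  finally show ?thesis
    using l by (simp add: powr_minus field_simps)
qed

lemma ou_state_measurable: "t \<ge> 0 \<Longrightarrow> ou_state R a x0 t \<in> borel_measurable M"
  using ou_noise_moments(1) unfolding ou_state_def[abs_def] by measurable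

lemma ou_state_measurable_pair[measurable]:
  "(\<lambda>(\<omega>,s). ou_state R a x0 (max 0 s) \<omega>) \<in> borel_measurable (M \<Otimes>\<^sub>M lborel)"
  by (rule continuous_process_measurable_pair)
    (auto intro: ou_state_measurable ou_state_continuous[OF R_continuous])

end

section \<open>Long-run costs and the equilibrium\<close>

definition ou_moment :: "'w measure \<Rightarrow> (real \<Rightarrow> 'w \<Rightarrow> real) \<Rightarrow> real \<Rightarrow> ennreal" where
  "ou_moment M R u = (\<integral>\<^sup>+\<omega>. ennreal ((ou_noise R (-1) (max 0 u) \<omega>)\<^sup>2) \<partial>M)"

definition ou_cesaro_moment :: "'w measure \<Rightarrow> (real \<Rightarrow> 'w \<Rightarrow> real) \<Rightarrow> real \<Rightarrow> ennreal" where
  "ou_cesaro_moment M R S = ennreal (1 / S) * (\<integral>\<^sup>+u. ou_moment M R u * indicator {0..S} u \<partial>lborel)"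

lemma linear_feedback_drift:
  "b1 * y + (\<Sum>j\<in>I. b2 j * (K j * y)) = (b1 + (\<Sum>j\<in>I. b2 j * K j)) * (y::real)"
  by (simp add: sum_distrib_right distrib_right mult.assoc)

lemma state_solution_iff:
  "state_solution M R I b1 b2 x0 K x \<longleftrightarrow>
     (\<forall>\<omega>\<in>space M. \<forall>t\<ge>0. (\<lambda>s. x s \<omega>) integrable_on {0..t} \<and>
        x t \<omega> = x0 + integral {0..t} (\<lambda>s. (b1 + (\<Sum>j\<in>I. b2 j * K j)) * x s \<omega>) + R t \<omega>)"
  unfolding state_solution_def linear_feedback_drift ..

lemma sum_fun_upd_remove:
  assumes "finite I" "i \<in> I"
  shows "(\<Sum>j\<in>I. b j * (K(i := k)) j) = b i * k + (\<Sum>j\<in>I - {i}. b j * K j)"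
  using sum.remove[OF assms, of "\<lambda>j. b j * (K(i := k)) j"] by simp

context fractional_covariance_process
begin

lemma ou_moment_measurable[measurable]: "ou_moment M R \<in> borel_measurable borel"
proof -
  have [measurable]: "(\<lambda>(s, \<omega>). ou_noise R (-1) (max 0 s) \<omega>) \<in> borel_measurable (borel \<Otimes>\<^sub>M M)"
    by (rule continuous_process_measurable_pair_swap)
      (auto intro: ou_noise_moments(1) ou_noise_continuous R_continuous)
  show ?thesis
    unfolding ou_moment_def[abs_def] by measurable
qed

lemma ou_state_second_moment:
  assumes a: "a < 0" and Q: "Q \<ge> 0" and t: "t \<ge> 0"
  shows "(\<integral>\<^sup>+\<omega>. ennreal (Q * (ou_state R a x0 t \<omega>)\<^sup>2) \<partial>M)
       = ennreal (Q * (exp (a * t) * x0)\<^sup>2) + ennreal (Q * (- a) powr (-2 * H)) * ou_moment M R (- a * t)"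
proof -
  define e where "e = exp (a * t) * x0"
  define Z where "Z = ou_noise R a t"
  note Zs = ou_noise_moments[OF t, of a, folded Z_def]
  have [measurable]: "Z \<in> borel_measurable M" by (rule Zs(1))
  have sq: "Q * (e + Z \<omega>)\<^sup>2 = Q * e\<^sup>2 + (2 * Q * e) * Z \<omega> + Q * (Z \<omega>)\<^sup>2" for \<omega>
    by (simp add: power2_eq_square algebra_simps)
  have int: "integrable M (\<lambda>\<omega>. Q * (e + Z \<omega>)\<^sup>2)"
    unfolding sq using Zs(2,3) by simp
  define E where "E = (\<integral>\<omega>. (ou_noise R (-1) (- a * t) \<omega>)\<^sup>2 \<partial>M)"
  have E: "E \<ge> 0" unfolding E_def by simp
  have "(\<integral>\<^sup>+\<omega>. ennreal (Q * (e + Z \<omega>)\<^sup>2) \<partial>M) = ennreal (\<integral>\<omega>. Q * (e + Z \<omega>)\<^sup>2 \<partial>M)"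
    using Q by (intro nn_integral_eq_integral int) simp_all
  also have "(\<integral>\<omega>. Q * (e + Z \<omega>)\<^sup>2 \<partial>M) = Q * e\<^sup>2 + (2 * Q * e) * (\<integral>\<omega>. Z \<omega> \<partial>M) + Q * (\<integral>\<omega>. (Z \<omega>)\<^sup>2 \<partial>M)"
    unfolding sq using Zs(2,3) by (simp add: prob_space)
  also have "\<dots> = Q * e\<^sup>2 + Q * (- a) powr (-2 * H) * E"
    using ou_noise_second_moment_rescale[of "- a" t] a t unfolding E_def Z_def by (simp add: ou_noise_moments(4)[OF t])
  also have "ennreal \<dots> = ennreal (Q * e\<^sup>2) + ennreal (Q * (- a) powr (-2 * H)) * ennreal E"
    using Q E by (simp add: ennreal_plus ennreal_mult)
  also have "ennreal E = ou_moment M R (- a * t)"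
    using a t unfolding ou_moment_def E_def
    by (simp add: nn_integral_eq_integral ou_noise_moments(2) mult_nonpos_nonneg max_absorb2)
  finally have "(\<integral>\<^sup>+\<omega>. ennreal (Q * (e + Z \<omega>)\<^sup>2) \<partial>M)
      = ennreal (Q * e\<^sup>2) + ennreal (Q * (- a) powr (-2 * H)) * ou_moment M R (- a * t)" .
  then show ?thesis
    unfolding ou_state_def e_def Z_def .
qed

lemma ou_state_time_average:
  assumes a: "a < 0" and Q: "Q \<ge> 0" and T: "T > 0"
  shows "ennreal (1 / T) * (\<integral>\<^sup>+\<omega>. (\<integral>\<^sup>+t\<in>{0..T}. ennreal (Q * (ou_state R a x0 t \<omega>)\<^sup>2) \<partial>lborel) \<partial>M)
       = ennreal (1 / T) * (\<integral>\<^sup>+t. ennreal (Q * (exp (a * t) * x0)\<^sup>2) * indicator {0..T} t \<partial>lborel)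
         + ennreal (Q * (- a) powr (-2 * H)) * ou_cesaro_moment M R (- a * T)"
proof -
  define C where "C = ennreal (Q * (- a) powr (-2 * H))"
  define D where "D = (\<integral>\<^sup>+t. ennreal (Q * (exp (a * t) * x0)\<^sup>2) * indicator {0..T} t \<partial>lborel)"
  define N where "N = (\<integral>\<^sup>+u. ou_moment M R u * indicator {0..- a * T} u \<partial>lborel)"
  have "(\<integral>\<^sup>+\<omega>. (\<integral>\<^sup>+t\<in>{0..T}. ennreal (Q * (ou_state R a x0 t \<omega>)\<^sup>2) \<partial>lborel) \<partial>M)
      = (\<integral>\<^sup>+t. (\<integral>\<^sup>+\<omega>. ennreal (Q * (ou_state R a x0 (max 0 t) \<omega>)\<^sup>2) * indicator {0..T} t \<partial>M) \<partial>lborel)"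
    by (subst pair_lborel.Fubini') (auto intro!: nn_integral_cong split: split_indicator)
  also have "\<dots> = (\<integral>\<^sup>+t. ennreal (Q * (exp (a * t) * x0)\<^sup>2) * indicator {0..T} t
                    + C * (ou_moment M R (- a * t) * indicator {0..T} t) \<partial>lborel)"
    by (intro nn_integral_cong)
      (auto simp: ou_state_second_moment[OF a Q] C_def distrib_right split: split_indicator)
  also have "\<dots> = D + C * (\<integral>\<^sup>+t. ou_moment M R (- a * t) * indicator {0..T} t \<partial>lborel)"
    unfolding D_def by (subst nn_integral_add) (auto simp: nn_integral_cmult)
  also have "(\<integral>\<^sup>+t. ou_moment M R (- a * t) * indicator {0..T} t \<partial>lborel) = ennreal (1 / (- a)) * N"
    unfolding N_def using a by (intro nn_integral_Icc_rescale) simp_all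
  finally have eq: "(\<integral>\<^sup>+\<omega>. (\<integral>\<^sup>+t\<in>{0..T}. ennreal (Q * (ou_state R a x0 t \<omega>)\<^sup>2) \<partial>lborel) \<partial>M)
      = D + C * (ennreal (1 / (- a)) * N)" .
  have "ennreal (1 / T) * ennreal (1 / (- a)) = ennreal (1 / (- a * T))"
    using a T by (simp add: ennreal_mult[symmetric] mult.commute)
  then have "ennreal (1 / T) * (C * (ennreal (1 / (- a)) * N)) = C * (ennreal (1 / (- a * T)) * N)"
    by (metis mult.assoc mult.left_commute)
  then show ?thesis
    unfolding eq ou_cesaro_moment_def C_def[symmetric] D_def[symmetric] N_def[symmetric] distrib_left by simp
qed

lemma ou_state_long_run_cost:
  assumes a: "a < 0" and Q: "Q \<ge> 0"
  shows "Limsup at_top (\<lambda>T. ennreal (1 / T) *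
           (\<integral>\<^sup>+\<omega>. (\<integral>\<^sup>+t\<in>{0..T}. ennreal (Q * (ou_state R a x0 t \<omega>)\<^sup>2) \<partial>lborel) \<partial>M))
       = Limsup at_top (\<lambda>S. ennreal (Q * (- a) powr (-2 * H)) * ou_cesaro_moment M R S)"
proof -
  have "Limsup at_top (\<lambda>T. ennreal (1 / T) *
           (\<integral>\<^sup>+\<omega>. (\<integral>\<^sup>+t\<in>{0..T}. ennreal (Q * (ou_state R a x0 t \<omega>)\<^sup>2) \<partial>lborel) \<partial>M))
      = Limsup at_top (\<lambda>T. ennreal (1 / T) * (\<integral>\<^sup>+t. ennreal (Q * (exp (a * t) * x0)\<^sup>2) * indicator {0..T} t \<partial>lborel)
           + ennreal (Q * (- a) powr (-2 * H)) * ou_cesaro_moment M R (- a * T))"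
    by (intro Limsup_eq eventually_mono[OF eventually_gt_at_top[of 0]] ou_state_time_average a Q)
  also have "\<dots> = Limsup at_top (\<lambda>T. ennreal (Q * (- a) powr (-2 * H)) * ou_cesaro_moment M R (- a * T))"
    by (intro Limsup_add_vanishing exp_square_time_average_vanishes a Q)
  also have "\<dots> = Limsup at_top (\<lambda>S. ennreal (Q * (- a) powr (-2 * H)) * ou_cesaro_moment M R S)"
    using Limsup_at_top_rescale[of "- a" "\<lambda>S. ennreal (Q * (- a) powr (-2 * H)) * ou_cesaro_moment M R S"] a
    by simp
  finally show ?thesis .
qed

lemma state_solution_ou_state:
  "state_solution M R I b1 b2 x0 K (ou_state R (b1 + (\<Sum>j\<in>I. b2 j * K j)) x0)"
  unfolding state_solution_iff
proof (intro ballI allI impI)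
  fix \<omega> t assume "\<omega> \<in> space M" "0 \<le> (t::real)"
  from ou_state_solves[where R=R and \<omega>=\<omega>, OF R_continuous[OF this(1)] this(2)]
  show "(\<lambda>s. ou_state R (b1 + (\<Sum>j\<in>I. b2 j * K j)) x0 s \<omega>) integrable_on {0..t} \<and>
      ou_state R (b1 + (\<Sum>j\<in>I. b2 j * K j)) x0 t \<omega>
      = x0 + integral {0..t} (\<lambda>s. (b1 + (\<Sum>j\<in>I. b2 j * K j)) * ou_state R (b1 + (\<Sum>j\<in>I. b2 j * K j)) x0 s \<omega>) + R t \<omega>"
    by blast
qed

lemma state_solution_eq_ou_state:
  assumes "state_solution M R I b1 b2 x0 K x" "\<omega> \<in> space M" "t \<ge> 0"
  shows "x t \<omega> = ou_state R (b1 + (\<Sum>j\<in>I. b2 j * K j)) x0 t \<omega>"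
  using assms unfolding state_solution_iff by (intro ou_state_unique[OF R_continuous]) auto

lemma avg_cost_linear_feedback:
  assumes adm: "admissible_gains I b1 b2 K" and x: "state_solution M R I b1 b2 x0 K x"
    and q: "q i \<ge> 0" and r: "r i \<ge> 0"
  shows "avg_cost M q r i K x = Limsup at_top (\<lambda>S.
           ennreal ((q i + r i * (K i)\<^sup>2) * (- (b1 + (\<Sum>j\<in>I. b2 j * K j))) powr (-2 * H)) * ou_cesaro_moment M R S)"
proof -
  define a where "a = b1 + (\<Sum>j\<in>I. b2 j * K j)"
  have a: "a < 0" using adm unfolding admissible_gains_def a_def .
  have integrand: "q i * (x t \<omega>)\<^sup>2 + r i * (K i * x t \<omega>)\<^sup>2 = (q i + r i * (K i)\<^sup>2) * (ou_state R a x0 t \<omega>)\<^sup>2"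
    if "\<omega> \<in> space M" "t \<ge> 0" for \<omega> t
    using state_solution_eq_ou_state[OF x that] unfolding a_def by (simp add: power_mult_distrib algebra_simps)
  have "(\<integral>\<^sup>+\<omega>. (\<integral>\<^sup>+t\<in>{0..T}. ennreal (q i * (x t \<omega>)\<^sup>2 + r i * (K i * x t \<omega>)\<^sup>2) \<partial>lborel) \<partial>M)
      = (\<integral>\<^sup>+\<omega>. (\<integral>\<^sup>+t\<in>{0..T}. ennreal ((q i + r i * (K i)\<^sup>2) * (ou_state R a x0 t \<omega>)\<^sup>2) \<partial>lborel) \<partial>M)" for T
    by (intro nn_integral_cong) (auto simp: integrand split: split_indicator)
  then have "avg_cost M q r i K x = Limsup at_top (\<lambda>T. ennreal (1 / T) *
      (\<integral>\<^sup>+\<omega>. (\<integral>\<^sup>+t\<in>{0..T}. ennreal ((q i + r i * (K i)\<^sup>2) * (ou_state R a x0 t \<omega>)\<^sup>2) \<partial>lborel) \<partial>M))"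
    unfolding avg_cost_def by simp
  also have "\<dots> = Limsup at_top (\<lambda>S. ennreal ((q i + r i * (K i)\<^sup>2) * (- a) powr (-2 * H)) * ou_cesaro_moment M R S)"
    using q r by (intro ou_state_long_run_cost a) simp
  finally show ?thesis unfolding a_def .
qed

lemma best_response_avg_cost_le:
  assumes I: "finite I" "i \<in> I" and params: "b2 i \<noteq> 0" "q i > 0" "r i > 0" and H: "H < 1"
    and Ki: "K i = - (b1 + (\<Sum>j\<in>I - {i}. b2 j * K j)
              + sqrt ((b1 + (\<Sum>j\<in>I - {i}. b2 j * K j))\<^sup>2 + 4 * H * (1 - H) * (b2 i)\<^sup>2 * q i / r i))
              / (2 * b2 i * (1 - H))"
    and admK: "admissible_gains I b1 b2 K" and adm: "admissible_gains I b1 b2 (K(i := k))"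
    and x: "state_solution M R I b1 b2 x0 K x" and y: "state_solution M R I b1 b2 x0 (K(i := k)) y"
  shows "avg_cost M q r i K x \<le> avg_cost M q r i (K(i := k)) y"
proof -
  define c where "c = b1 + (\<Sum>j\<in>I - {i}. b2 j * K j)"
  have drift: "b1 + (\<Sum>j\<in>I. b2 j * (K(i := k')) j) = c + b2 i * k'" for k'
    unfolding c_def sum_fun_upd_remove[OF I] by simp
  have "b1 + (\<Sum>j\<in>I. b2 j * K j) = c + b2 i * K i" using drift[of "K i"] by simp
  then have cost_x: "avg_cost M q r i K x = Limsup at_top (\<lambda>S.
      ennreal ((q i + r i * (K i)\<^sup>2) * (- (c + b2 i * K i)) powr (-2 * H)) * ou_cesaro_moment M R S)"
    using avg_cost_linear_feedback[OF admK x] params by simp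
  have cost_y: "avg_cost M q r i (K(i := k)) y = Limsup at_top (\<lambda>S.
      ennreal ((q i + r i * k\<^sup>2) * (- (c + b2 i * k)) powr (-2 * H)) * ou_cesaro_moment M R S)"
    using avg_cost_linear_feedback[OF adm y, unfolded drift fun_upd_same] params by simp
  have "c + b2 i * k < 0" using adm unfolding admissible_gains_def drift .
  then have "(q i + r i * (K i)\<^sup>2) * (- (c + b2 i * K i)) powr (-2 * H)
      \<le> (q i + r i * k\<^sup>2) * (- (c + b2 i * k)) powr (-2 * H)"
    using params H H_pos Ki[folded c_def] by (intro best_response_gain_optimal) auto
  then show ?thesis
    unfolding cost_x cost_y by (intro Limsup_mono always_eventually allI mult_right_mono ennreal_leI) simp_all
qed

end

theorem mainTheorem4:
  fixes M :: "'w measure" and R :: "real \<Rightarrow> 'w \<Rightarrow> real"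
    and I :: "'i set" and H b1 x0 :: real and b2 q r K :: "'i \<Rightarrow> real"
  assumes "prob_space M"
    and "rosenblatt_second_order M H R"
    and "1/2 < H" and "H < 1"
    and "finite I"
    and "\<forall>j\<in>I. b2 j \<noteq> 0 \<and> q j > 0 \<and> r j > 0"
    and "\<forall>i\<in>I. K i = - (b1 + (\<Sum>j\<in>I - {i}. b2 j * K j)
              + sqrt ((b1 + (\<Sum>j\<in>I - {i}. b2 j * K j))\<^sup>2 + 4 * H * (1 - H) * (b2 i)\<^sup>2 * q i / r i))
              / (2 * b2 i * (1 - H))"
    and "b1 + (\<Sum>j\<in>I. b2 j * K j) < 0"
  shows "linear_feedback_equilibrium M R I b1 b2 x0 q r K"
proof -
  interpret fractional_covariance_process M H R
    using assms(1-3) by (intro fractional_covariance_process.intro fractional_covariance_process_axioms.intro) auto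
  have "avg_cost M q r i K x \<le> avg_cost M q r i (K(i := k)) y"
    if "i \<in> I" "admissible_gains I b1 b2 (K(i := k))"
      "state_solution M R I b1 b2 x0 K x" "state_solution M R I b1 b2 x0 (K(i := k)) y" for i k x y
    by (rule best_response_avg_cost_le[where K=K and q=q and r=r and ?b1.0=b1 and ?b2.0=b2 and ?x0.0=x0,
          OF assms(5) that(1) _ _ _ assms(4) bspec[OF assms(7) that(1)] _ that(2-4)])
      (use assms(6,8) that(1) in \<open>auto simp: admissible_gains_def\<close>)
  then show ?thesis
    unfolding linear_feedback_equilibrium_def using assms(8) state_solution_ou_state
    unfolding admissible_gains_def by blast
qed

end
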